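(* Fix $K\in\mathbb N$ and $\nu_0,\nu_1,\dots,\nu_K\ge0$ with $\nu_0>0$, $\nu_1>0$, $\max\{\nu_i:1<i\le K\}>0$, $\nu_0+\nu_1+\dots+\nu_K=1-\varepsilon<1$, and $\sum_{i=1}^Ki\nu_i+\varepsilon=1-\delta<1$. For $c\in[0,\varepsilon]$ let $X^{(c)}$ be the random variable with values in $\{-1,0,\dots,K-1\}$ and \[ \mathbf P(X^{(c)}=k)=\begin{cases}\dfrac{\nu_{k+1}}{1-\varepsilon+c}&k\ne0,\\[2mm]\dfrac{\nu_1+c}{1-\varepsilon+c}&k=0,\end{cases} \] and let $X^{(c)}_1,X^{(c)}_2,\dots$ be i.i.d. copies of $X^{(c)}$. Then there exists $\lambda<1$ such that for all $m$ large enough, for all $c\in[0,\varepsilon]$, all $0\le s<\delta$ and all $r$ with $\max\{s,\delta/2\}<r\le\delta$ such that $(\delta-r)m$ and $(\delta-s)m$ are integers, \[ \frac{\mathbf P\big(X^{(c)}_1+\dots+X^{(c)}_m=-(\delta-r)m\big)}{\mathbf P\big(X^{(c)}_1+\dots+X^{(c)}_{m-1}=-(\delta-s)m\big)}\le\lambda^{(r-s)m}. \] *)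

theory Defs
  imports "HOL-Probability.Probability"
begin

definition X_pmf :: "(nat \<Rightarrow> real) \<Rightarrow> nat \<Rightarrow> real \<Rightarrow> real \<Rightarrow> int pmf" where
  "X_pmf \<nu> K \<epsilon> c = embed_pmf (\<lambda>k::int.
     if k \<in> {-1 .. int K - 1} then
       (if k = 0 then (\<nu> 1 + c) / (1 - \<epsilon> + c) else \<nu> (nat (k + 1)) / (1 - \<epsilon> + c))
     else 0)"

primrec iid_sum_pmf :: "int pmf \<Rightarrow> nat \<Rightarrow> int pmf" where
  "iid_sum_pmf p 0 = return_pmf 0"
| "iid_sum_pmf p (Suc m) = do { x \<leftarrow> p; s \<leftarrow> iid_sum_pmf p m; return_pmf (x + s) }"

end

theory Submission
  imports Defs
begin

(* P(S_n = y) equals mgf(theta)^n e^(-theta y) times the same probability for the walk whose step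
   law is exponentially tilted by theta. Hence the ratio equals mgf(theta) e^(-theta (b-a)) times
   the same ratio for the tilted walk, and theta is chosen so that the tilted walk has mean
   -b/(m-1): the target of the denominator becomes typical. A local limit theorem that is uniform
   over all step laws whose masses at -1 and 0 are bounded below shows that both tilted
   probabilities are of order 1/sqrt m. If b - a is small compared to m, moving the mean from below
   -delta up to -b/(m-1) > -3 delta/4 forces theta to be bounded below, and e^(-theta (b-a)) gives
   the decay. If b - a is of order m, the numerator is bounded instead by a Chernoff bound with an
   extra tilt h of order (b-a)/m, whose saving e^(-c (b-a)^2 / m) outweighs the factor sqrt m lost
   in the denominator. *)

section \<open>Convolution powers and Fourier inversion\<close>

definition step_range :: "nat \<Rightarrow> int set" where "step_range K = {-1..int K - 1}"

lemma finite_step_range[simp]: "finite (step_range K)" by (simp add: step_range_def)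

fun conv_pow :: "nat \<Rightarrow> (int \<Rightarrow> real) \<Rightarrow> nat \<Rightarrow> int \<Rightarrow> real" where
  "conv_pow K w 0 y = (if y = 0 then 1 else 0)"
| "conv_pow K w (Suc n) y = (\<Sum>k\<in>step_range K. w k * conv_pow K w n (y - k))"

definition char_fun :: "nat \<Rightarrow> (int \<Rightarrow> real) \<Rightarrow> real \<Rightarrow> complex" where
  "char_fun K w t = (\<Sum>k\<in>step_range K. complex_of_real (w k) * iexp (t * of_int k))"

lemma integral_iexp_int:
  fixes z :: int
  shows "integral {-pi..pi} (\<lambda>t. iexp (- (t * of_int z))) = (if z = 0 then complex_of_real (2*pi) else 0)"
proof (cases "z = 0")
  case True
  then show ?thesis by (simp add: scaleR_conv_of_real)
next
  case False
  let ?F = "\<lambda>t. \<i> * iexp (- (t * of_int z)) / of_int z"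
  have d: "(?F has_vector_derivative iexp (- (t * of_int z))) (at t within {-pi..pi})" for t
  proof -
    have 1: "((\<lambda>t. - (t * of_int z)) has_vector_derivative (- of_int z)) (at t within {-pi..pi})"
      by (auto intro!: derivative_eq_intros simp: has_real_derivative_iff_has_vector_derivative[symmetric])
    have 2: "(iexp has_vector_derivative \<i> * iexp (- (t * of_int z))) (at (- (t * of_int z)) within (\<lambda>t. - (t * of_int z)) ` {-pi..pi})"
      by (rule has_vector_derivative_iexp)
    have "((iexp \<circ> (\<lambda>t. - (t * of_int z))) has_vector_derivative (- of_int z) *\<^sub>R (\<i> * iexp (- (t * of_int z)))) (at t within {-pi..pi})"
      by (rule vector_diff_chain_within[OF 1 2])
    then have "((\<lambda>t. iexp (- (t * of_int z))) has_vector_derivative (- of_int z) *\<^sub>R (\<i> * iexp (- (t * of_int z)))) (at t within {-pi..pi})"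
      by (simp add: o_def)
    then have "(?F has_vector_derivative ((- of_int z) *\<^sub>R (\<i> * iexp (- (t * of_int z)))) * \<i> / of_int z) (at t within {-pi..pi})"
      by (auto intro!: derivative_eq_intros simp: mult_ac)
    moreover have "((- of_int z) *\<^sub>R (\<i> * iexp (- (t * of_int z)))) * \<i> / of_int z = iexp (- (t * of_int z))"
      using False by (simp add: scaleR_conv_of_real field_simps)
    ultimately show ?thesis by simp
  qed
  have "((\<lambda>t. iexp (- (t * of_int z))) has_integral (?F pi - ?F (-pi))) {-pi..pi}"
    apply (rule fundamental_theorem_of_calculus)
     apply simp
    apply (rule d)
    done
  moreover have "?F pi = ?F (-pi)"
  proof -
    have "iexp (pi * of_int z) = iexp (-(pi * of_int z)) * exp ((2 * of_int z * pi) * \<i>)"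
    proof -
      have "iexp (-(pi * of_int z)) * exp ((2 * of_int z * pi) * \<i>) = exp (\<i> * complex_of_real (-(pi * of_int z)) + (2 * of_int z * pi) * \<i>)"
        by (simp only: exp_add)
      also have "\<i> * complex_of_real (-(pi * of_int z)) + (2 * of_int z * pi) * \<i> = \<i> * complex_of_real (pi * of_int z)"
        by (simp add: algebra_simps)
      finally show ?thesis by simp
    qed
    also have "exp ((2 * of_int z * pi) * \<i>) = 1"
      by (rule exp_integer_2pi) simp
    finally have e: "iexp (pi * of_int z) = iexp (-(pi * of_int z))" by (simp only: mult_1_right)
    show ?thesis using e by (auto simp: mult_ac)
  qed
  ultimately show ?thesis using False by (simp add: integral_unique)
qed

lemma continuous_on_char_fun[continuous_intros]: "continuous_on S (char_fun K w)"
  unfolding char_fun_def by (intro continuous_intros)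

lemma conv_pow_inversion:
  "complex_of_real (conv_pow K w n z) =
     integral {-pi..pi} (\<lambda>t. char_fun K w t ^ n * iexp (- (t * of_int z))) / complex_of_real (2*pi)"
proof (induction n arbitrary: z)
  case 0
  show ?case using integral_iexp_int[of z] by (simp add: scaleR_conv_of_real)
next
  case (Suc n)
  have eq: "char_fun K w t ^ Suc n * iexp (- (t * of_int z)) =
      (\<Sum>k\<in>step_range K. complex_of_real (w k) * (char_fun K w t ^ n * iexp (- (t * of_int (z - k)))))" for t
  proof -
    have "char_fun K w t ^ Suc n * iexp (- (t * of_int z)) =
       char_fun K w t * (char_fun K w t ^ n * iexp (- (t * of_int z)))"
      by (simp only: power_Suc mult.assoc)
    also have "\<dots> = (\<Sum>k\<in>step_range K. complex_of_real (w k) * iexp (t * of_int k) * (char_fun K w t ^ n * iexp (- (t * of_int z))))"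
      by (simp only: char_fun_def sum_distrib_right)
    also have "\<dots> = (\<Sum>k\<in>step_range K. complex_of_real (w k) * (char_fun K w t ^ n * (iexp (t * of_int k) * iexp (- (t * of_int z)))))"
      by (intro sum.cong refl) (simp only: mult_ac)
    also have "\<dots> = (\<Sum>k\<in>step_range K. complex_of_real (w k) * (char_fun K w t ^ n * iexp (- (t * of_int (z - k)))))"
      by (intro sum.cong refl) (simp add: exp_add[symmetric] algebra_simps)
    finally show ?thesis .
  qed
  have "integral {-pi..pi} (\<lambda>t. char_fun K w t ^ Suc n * iexp (- (t * of_int z)))
     = (\<Sum>k\<in>step_range K. complex_of_real (w k) * integral {-pi..pi} (\<lambda>t. char_fun K w t ^ n * iexp (- (t * of_int (z - k)))))"
    unfolding eq
    by (subst integral_sum) (auto intro!: integrable_on_cmult_left integrable_continuous_interval continuous_intros)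
  also have "\<dots> = (\<Sum>k\<in>step_range K. complex_of_real (w k) * (complex_of_real (conv_pow K w n (z - k)) * complex_of_real (2*pi)))"
    using Suc.IH by (intro sum.cong refl) simp
  finally show ?case by (simp add: sum_divide_distrib sum_distrib_right mult_ac)
qed

lemma conv_pow_eq_Re_integral: "conv_pow K w n z = Re (integral {-pi..pi} (\<lambda>t. char_fun K w t ^ n * iexp (- (t * of_int z)))) / (2*pi)"
proof -
  have "Re (complex_of_real (conv_pow K w n z)) = Re (integral {-pi..pi} (\<lambda>t. char_fun K w t ^ n * iexp (- (t * of_int z))) / complex_of_real (2*pi))"
    by (subst conv_pow_inversion) simp
  then show ?thesis by (simp add: Re_divide_of_real)
qed

lemma conv_pow_nonneg:
  assumes "\<And>k. k \<in> step_range K \<Longrightarrow> 0 \<le> w k"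
  shows "0 \<le> conv_pow K w n y"
  using assms by (induction n arbitrary: y) (auto intro!: sum_nonneg mult_nonneg_nonneg)

lemma conv_pow_Suc_le:
  assumes nn: "\<And>k. k \<in> step_range K \<Longrightarrow> 0 \<le> w k" and s1: "(\<Sum>k\<in>step_range K. w k) = 1"
    and bound: "\<And>z. conv_pow K w n z \<le> B"
  shows "conv_pow K w (Suc n) y \<le> B"
proof -
  have "conv_pow K w (Suc n) y \<le> (\<Sum>k\<in>step_range K. w k * B)"
    unfolding conv_pow.simps using nn bound by (intro sum_mono mult_left_mono) auto
  also have "\<dots> = B" using s1 by (simp add: sum_distrib_right[symmetric])
  finally show ?thesis .
qed

lemma conv_pow_le_1:
  assumes nn: "\<And>k. k \<in> step_range K \<Longrightarrow> 0 \<le> w k" and s1: "(\<Sum>k\<in>step_range K. w k) = 1"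
  shows "conv_pow K w n y \<le> 1"
proof (induction n arbitrary: y)
  case 0 then show ?case by simp
next
  case (Suc n)
  show ?case by (rule conv_pow_Suc_le[OF nn s1 Suc.IH])
qed

section \<open>Estimates for the characteristic function\<close>

lemma norm_power_diff_le:
  fixes a b :: complex
  assumes "cmod a \<le> 1" "cmod b \<le> 1"
  shows "cmod (a ^ n - b ^ n) \<le> real n * cmod (a - b)"
proof (induction n)
  case 0 then show ?case by simp
next
  case (Suc n)
  have "a ^ Suc n - b ^ Suc n = a * (a ^ n - b ^ n) + b ^ n * (a - b)"
    by (simp add: algebra_simps)
  then have "cmod (a ^ Suc n - b ^ Suc n) \<le> cmod a * cmod (a ^ n - b ^ n) + cmod b ^ n * cmod (a - b)"
    by (metis norm_mult norm_power norm_triangle_ineq)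
  also have "\<dots> \<le> 1 * (real n * cmod (a - b)) + 1 * cmod (a - b)"
    using assms Suc.IH
    by (intro add_mono mult_mono) (auto intro: power_le_one)
  finally show ?case by (simp add: algebra_simps)
qed

lemma one_minus_cos_ge:
  fixes t :: real
  assumes "\<bar>t\<bar> \<le> pi"
  shows "t^2 / 12 \<le> 1 - cos t"
proof -
  have c1: "cmod (iexp t - (\<Sum>k \<le> 3. (\<i> * t)^k / fact k)) \<le> \<bar>t\<bar>^4 / fact 4"
    using iexp_approx1[of t 3] by (simp add: numeral_eq_Suc)
  have c2: "Re (iexp t - (\<Sum>k \<le> 3. (\<i> * t)^k / fact k)) = cos t - (1 - t^2/2)"
    by (simp add: numeral_eq_Suc Re_exp fact_numeral power2_eq_square)
  have f4: "fact 4 = (24::real)" by (simp add: fact_numeral)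
  have "\<bar>cos t - (1 - t^2/2)\<bar> \<le> \<bar>t\<bar>^4 / 24"
  proof -
    have "\<bar>Re (iexp t - (\<Sum>k \<le> 3. (\<i> * t)^k / fact k))\<bar> \<le> \<bar>t\<bar>^4 / 24"
      using order_trans[OF abs_Re_le_cmod c1] f4 by simp
    then show ?thesis by (simp only: c2)
  qed
  moreover have "\<bar>t\<bar>^4 = t^2 * t^2" by (simp add: power_even_abs_numeral power2_eq_square[symmetric] power_mult[symmetric])
  moreover have "t^2 \<le> 993/100"
  proof -
    have "pi \<le> 3.15" using pi_approx(2) by simp
    then have "\<bar>t\<bar> \<le> 3.15" using assms by linarith
    then have "\<bar>t\<bar>^2 \<le> 3.15^2" by (intro power_mono) auto
    then show ?thesis by (simp add: power2_eq_square)
  qed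
  ultimately have "\<bar>cos t - (1 - t^2/2)\<bar> \<le> t^2 * 993 / 2400"
  proof -
    assume h1: "\<bar>cos t - (1 - t^2/2)\<bar> \<le> \<bar>t\<bar>^4 / 24" and h2: "\<bar>t\<bar>^4 = t^2 * t^2" and h3: "t^2 \<le> 993/100"
    have "t^2 * t^2 \<le> t^2 * (993/100)" using h3 by (intro mult_left_mono) auto
    then show ?thesis using h1 h2 by linarith
  qed
  then show ?thesis by linarith
qed

lemma norm_two_point_char_le:
  fixes A B t :: real
  assumes A: "0 \<le> A" and B: "0 \<le> B" and S: "A + B \<le> 1"
  shows "cmod (complex_of_real A * iexp (-t) + complex_of_real B) \<le> A + B - A*B*(1 - cos t)"
proof -
  define Y where "Y = A*B*(1 - cos t)"
  have Y0: "0 \<le> Y" unfolding Y_def using A B by simp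
  have "A*B \<le> A*1" "A*B \<le> 1*B" using A B S by (intro mult_left_mono mult_right_mono; simp)+
  moreover have "Y \<le> A*B*2" unfolding Y_def using A B cos_ge_minus_one[of t] by (intro mult_left_mono) auto
  ultimately have YS: "Y \<le> A + B" by linarith
  have "(cmod (complex_of_real A * iexp (-t) + complex_of_real B))^2 = (A*cos t + B)^2 + (A * sin t)^2"
  proof -
    have r: "Re (complex_of_real A * iexp (-t) + complex_of_real B) = A*cos t + B" by (simp add: Re_exp)
    have i: "Im (complex_of_real A * iexp (-t) + complex_of_real B) = - (A * sin t)" by (simp add: Im_exp)
    show ?thesis by (simp only: cmod_power2 r i power2_minus)
  qed
  also have "\<dots> = (A+B)^2 - 2*Y"
  proof -
    have h: "A * (A * (cos t * cos t)) + A * (A * (sin t * sin t)) = A * A"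
      by (simp flip: distrib_left)
    show "(A*cos t + B)^2 + (A * sin t)^2 = (A+B)^2 - 2*Y"
      unfolding Y_def
    proof -
      have "(A*cos t + B)^2 + (A * sin t)^2 = (A * (A * (cos t * cos t)) + A * (A * (sin t * sin t))) + 2*A*B*cos t + B*B"
        unfolding power2_eq_square by algebra
      also have "\<dots> = A*A + 2*A*B*cos t + B*B" by (simp only: h)
      also have "\<dots> = (A+B)^2 - 2*(A*B*(1 - cos t))" unfolding power2_eq_square by algebra
      finally show "(A*cos t + B)^2 + (A * sin t)^2 = (A+B)^2 - 2*(A*B*(1 - cos t))" .
    qed
  qed
  also have "\<dots> \<le> (A + B - Y)^2"
  proof -
    have "(A + B - Y)^2 - ((A+B)^2 - 2*Y) = Y*Y + 2*Y*(1 - (A+B))"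
      by (simp add: power2_eq_square algebra_simps)
    moreover have "0 \<le> Y*Y + 2*Y*(1 - (A+B))" using Y0 S by (intro add_nonneg_nonneg mult_nonneg_nonneg) auto
    ultimately show ?thesis by linarith
  qed
  finally have "(cmod (complex_of_real A * iexp (-t) + complex_of_real B))^2 \<le> (A + B - Y)^2" .
  then show ?thesis unfolding Y_def[symmetric] by (rule power2_le_imp_le) (use YS in linarith)
qed

(* The lower bound on the masses at -1 and 0 keeps the characteristic function uniformly away
   from the unit circle off the origin; this is what makes the local limit theorem uniform. *)
definition aperiodic_weights :: "nat \<Rightarrow> real \<Rightarrow> (int \<Rightarrow> real) \<Rightarrow> bool" where
  "aperiodic_weights K \<alpha> w \<longleftrightarrow> (\<forall>k\<in>step_range K. 0 \<le> w k) \<and> (\<Sum>k\<in>step_range K. w k) = 1 \<and> \<alpha> \<le> w (-1) \<and> \<alpha> \<le> w 0"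

definition mean :: "nat \<Rightarrow> (int \<Rightarrow> real) \<Rightarrow> real" where
  "mean K w = (\<Sum>k\<in>step_range K. of_int k * w k)"

definition var :: "nat \<Rightarrow> (int \<Rightarrow> real) \<Rightarrow> real" where
  "var K w = (\<Sum>k\<in>step_range K. (of_int k - mean K w)^2 * w k)"

lemma norm_char_fun_le:
  assumes K: "1 \<le> K" and w: "aperiodic_weights K \<alpha> w" and t: "\<bar>t\<bar> \<le> pi" and a: "0 \<le> \<alpha>"
  shows "cmod (char_fun K w t) \<le> 1 - \<alpha>^2 * (t^2/12)"
proof -
  let ?R = "step_range K - {-1, 0}"
  have U: "step_range K = insert (-1) (insert 0 ?R)" using K by (auto simp: step_range_def)
  have nn: "\<And>k. k \<in> step_range K \<Longrightarrow> 0 \<le> w k" and s1: "(\<Sum>k\<in>step_range K. w k) = 1" and A: "\<alpha> \<le> w (-1)" and B: "\<alpha> \<le> w 0"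
    using w by (auto simp: aperiodic_weights_def)
  have m1: "-1 \<in> step_range K" and m0: "0 \<in> step_range K" using K by (auto simp: step_range_def)
  have sumsplit: "(\<Sum>k\<in>step_range K. f k) = f (-1) + f 0 + (\<Sum>k\<in>?R. f k)" for f :: "int \<Rightarrow> 'b::comm_monoid_add"
    by (subst U) (simp add: add.assoc)
  have sR: "w (-1) + w 0 + (\<Sum>k\<in>?R. w k) = 1" using s1 sumsplit[of w] by simp
  have sRnn: "0 \<le> (\<Sum>k\<in>?R. w k)" using nn by (intro sum_nonneg) auto
  have split: "char_fun K w t = (complex_of_real (w (-1)) * iexp (-t) + complex_of_real (w 0))
      + (\<Sum>k\<in>?R. complex_of_real (w k) * iexp (t * of_int k))"
    unfolding char_fun_def by (subst sumsplit) simp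
  have "cmod (char_fun K w t) \<le> cmod (complex_of_real (w (-1)) * iexp (-t) + complex_of_real (w 0))
      + (\<Sum>k\<in>?R. cmod (complex_of_real (w k) * iexp (t * of_int k)))"
    unfolding split by (rule order_trans[OF norm_triangle_ineq add_left_mono[OF norm_sum]])
  also have "(\<Sum>k\<in>?R. cmod (complex_of_real (w k) * iexp (t * of_int k))) = (\<Sum>k\<in>?R. w k)"
    using nn by (intro sum.cong refl) (simp add: norm_mult)
  also have "cmod (complex_of_real (w (-1)) * iexp (-t) + complex_of_real (w 0)) \<le> w (-1) + w 0 - w (-1) * w 0 * (1 - cos t)"
    using nn[OF m1] nn[OF m0] sR sRnn by (intro norm_two_point_char_le) auto
  finally have two_point: "cmod (char_fun K w t) \<le> 1 - w (-1) * w 0 * (1 - cos t)" using sR by linarith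
  have "\<alpha>^2 \<le> w (-1) * w 0" using A B a by (simp add: power2_eq_square mult_mono)
  moreover have "t^2/12 \<le> 1 - cos t" using one_minus_cos_ge t by simp
  moreover have "0 \<le> t^2/12" by simp
  ultimately have "\<alpha>^2 * (t^2/12) \<le> w (-1) * w 0 * (1 - cos t)"
    using nn[OF m1] nn[OF m0] by (intro mult_mono) (auto simp: a)
  then show ?thesis using two_point by linarith
qed

definition centred_char_fun :: "nat \<Rightarrow> (int \<Rightarrow> real) \<Rightarrow> real \<Rightarrow> complex" where
  "centred_char_fun K w t = (\<Sum>k\<in>step_range K. complex_of_real (w k) * iexp (t * (of_int k - mean K w)))"

lemma centred_char_fun_eq: "centred_char_fun K w t = char_fun K w t * iexp (- (t * mean K w))"
  unfolding centred_char_fun_def char_fun_def sum_distrib_right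
  by (intro sum.cong refl) (simp add: exp_add[symmetric] algebra_simps mult.assoc)

lemma norm_centred_char_fun: "cmod (centred_char_fun K w t) = cmod (char_fun K w t)"
  by (simp add: centred_char_fun_eq norm_mult)

lemma continuous_on_centred_char_fun[continuous_intros]: "continuous_on S (centred_char_fun K w)"
  unfolding centred_char_fun_def by (intro continuous_intros)

lemma inversion_integrand_centred: "char_fun K w t ^ n * iexp (- (t * of_int z)) = centred_char_fun K w t ^ n * iexp (- (t * (of_int z - real n * mean K w)))"
proof -
  have "centred_char_fun K w t ^ n = char_fun K w t ^ n * iexp (- (t * mean K w)) ^ n"
    by (simp add: centred_char_fun_eq power_mult_distrib)
  also have "iexp (- (t * mean K w)) ^ n = iexp (- (t * (real n * mean K w)))"
    by (simp add: exp_of_nat_mult[symmetric] algebra_simps)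
  finally have "centred_char_fun K w t ^ n * iexp (- (t * (of_int z - real n * mean K w))) =
      char_fun K w t ^ n * (iexp (- (t * (real n * mean K w))) * iexp (- (t * (of_int z - real n * mean K w))))"
    by (simp add: mult.assoc)
  also have "iexp (- (t * (real n * mean K w))) * iexp (- (t * (of_int z - real n * mean K w))) = iexp (- (t * of_int z))"
    by (simp add: exp_add[symmetric] algebra_simps)
  finally show ?thesis by simp
qed

lemma mean_bounds:
  assumes nn: "\<And>k. k \<in> step_range K \<Longrightarrow> 0 \<le> w k" and s1: "(\<Sum>k\<in>step_range K. w k) = 1"
  shows "-1 \<le> mean K w" "mean K w \<le> real K - 1"
proof -
  have "(\<Sum>k\<in>step_range K. (-1) * w k) \<le> (\<Sum>k\<in>step_range K. of_int k * w k)"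
    using nn by (intro sum_mono mult_right_mono) (auto simp: step_range_def)
  then show "-1 \<le> mean K w" unfolding mean_def using s1 by (simp add: sum_negf)
  have "(\<Sum>k\<in>step_range K. of_int k * w k) \<le> (\<Sum>k\<in>step_range K. (real K - 1) * w k)"
    using nn by (intro sum_mono mult_right_mono) (auto simp: step_range_def)
  then show "mean K w \<le> real K - 1" unfolding mean_def using s1 by (simp add: sum_distrib_left[symmetric])
qed

lemma abs_dev_mean_le:
  assumes nn: "\<And>k. k \<in> step_range K \<Longrightarrow> 0 \<le> w k" and s1: "(\<Sum>k\<in>step_range K. w k) = 1" and k: "k \<in> step_range K"
  shows "\<bar>of_int k - mean K w\<bar> \<le> real K"
  using mean_bounds[OF nn s1] k by (auto simp: step_range_def)

lemma var_bounds:
  assumes nn: "\<And>k. k \<in> step_range K \<Longrightarrow> 0 \<le> w k" and s1: "(\<Sum>k\<in>step_range K. w k) = 1"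
  shows "0 \<le> var K w" "var K w \<le> (real K)^2"
proof -
  show "0 \<le> var K w" unfolding var_def using nn by (intro sum_nonneg) auto
  have "(\<Sum>k\<in>step_range K. (of_int k - mean K w)^2 * w k) \<le> (\<Sum>k\<in>step_range K. (real K)^2 * w k)"
  proof (intro sum_mono mult_right_mono)
    fix k assume k: "k \<in> step_range K"
    show "0 \<le> w k" using nn k .
    have "\<bar>of_int k - mean K w\<bar>^2 \<le> (real K)^2"
      using abs_dev_mean_le[OF nn s1 k] by (intro power_mono) auto
    then show "(of_int k - mean K w)^2 \<le> (real K)^2" by simp
  qed
  then show "var K w \<le> (real K)^2" unfolding var_def using s1 by (simp add: sum_distrib_left[symmetric])
qed

lemma centred_char_fun_taylor:
  assumes nn: "\<And>k. k \<in> step_range K \<Longrightarrow> 0 \<le> w k" and s1: "(\<Sum>k\<in>step_range K. w k) = 1"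
  shows "cmod (centred_char_fun K w t - complex_of_real (1 - var K w * t^2 / 2)) \<le> (real K)^3 * \<bar>t\<bar>^3 / 6"
proof -
  define y where "y k = t * (of_int k - mean K w)" for k
  have s0: "(\<Sum>k\<in>step_range K. w k * y k) = 0"
  proof -
    have "(\<Sum>k\<in>step_range K. w k * y k) = t * ((\<Sum>k\<in>step_range K. of_int k * w k) - mean K w * (\<Sum>k\<in>step_range K. w k))"
      unfolding y_def by (simp add: sum_distrib_left sum_subtractf algebra_simps)
    then show ?thesis by (simp add: s1 mean_def)
  qed
  have s2: "(\<Sum>k\<in>step_range K. w k * (y k)^2) = var K w * t^2"
    unfolding y_def var_def sum_distrib_right by (intro sum.cong refl) (simp only: power_mult_distrib mult_ac)
  have tm: "complex_of_real (w k) * (1 + \<i> * y k + (\<i> * y k)^2 / 2)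
      = complex_of_real (w k) + \<i> * complex_of_real (w k * y k) - complex_of_real (w k * (y k)^2) / 2" for k
    by (simp add: power2_eq_square algebra_simps)
  have "(\<Sum>k\<in>step_range K. complex_of_real (w k) * (1 + \<i> * y k + (\<i> * y k)^2 / 2))
      = complex_of_real (\<Sum>k\<in>step_range K. w k) + \<i> * complex_of_real (\<Sum>k\<in>step_range K. w k * y k) - complex_of_real (\<Sum>k\<in>step_range K. w k * (y k)^2) / 2"
    unfolding tm by (simp add: sum.distrib sum_subtractf sum_distrib_left sum_divide_distrib)
  also have "\<dots> = complex_of_real (1 - var K w * t^2 / 2)"
    unfolding s1 s0 s2 by simp
  finally have main: "(\<Sum>k\<in>step_range K. complex_of_real (w k) * (1 + \<i> * y k + (\<i> * y k)^2 / 2)) = complex_of_real (1 - var K w * t^2 / 2)" .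
  have eq: "centred_char_fun K w t - complex_of_real (1 - var K w * t^2 / 2)
     = (\<Sum>k\<in>step_range K. complex_of_real (w k) * (iexp (y k) - (1 + \<i> * y k + (\<i> * y k)^2 / 2)))"
    unfolding main[symmetric] centred_char_fun_def y_def by (simp only: sum_subtractf[symmetric] right_diff_distrib)
  have "cmod (centred_char_fun K w t - complex_of_real (1 - var K w * t^2 / 2)) \<le> (\<Sum>k\<in>step_range K. cmod (complex_of_real (w k) * (iexp (y k) - (1 + \<i> * y k + (\<i> * y k)^2 / 2))))"
    unfolding eq by (rule norm_sum)
  also have "\<dots> \<le> (\<Sum>k\<in>step_range K. w k * ((real K)^3 * \<bar>t\<bar>^3 / 6))"
  proof (intro sum_mono)
    fix k assume k: "k \<in> step_range K"
    have a1: "cmod (iexp (y k) - (1 + \<i> * y k + (\<i> * y k)^2 / 2)) \<le> \<bar>y k\<bar>^3 / 6"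
      using iexp_approx1[of "y k" 2] by (simp add: numeral_eq_Suc fact_numeral power2_eq_square add.assoc)
    have "\<bar>y k\<bar> \<le> \<bar>t\<bar> * real K"
      unfolding y_def abs_mult by (rule mult_left_mono[OF abs_dev_mean_le[OF nn s1 k] abs_ge_zero])
    then have "\<bar>y k\<bar>^3 \<le> (\<bar>t\<bar> * real K)^3" by (rule power_mono[OF _ abs_ge_zero])
    then have "cmod (iexp (y k) - (1 + \<i> * y k + (\<i> * y k)^2 / 2)) \<le> (real K)^3 * \<bar>t\<bar>^3 / 6"
      using a1 by (simp add: power_mult_distrib mult.commute)
    then have "w k * cmod (iexp (y k) - (1 + \<i> * y k + (\<i> * y k)^2 / 2)) \<le> w k * ((real K)^3 * \<bar>t\<bar>^3 / 6)"
      by (rule mult_left_mono[OF _ nn[OF k]])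
    then show "cmod (complex_of_real (w k) * (iexp (y k) - (1 + \<i> * y k + (\<i> * y k)^2 / 2)))
        \<le> w k * ((real K)^3 * \<bar>t\<bar>^3 / 6)"
      by (simp only: norm_mult norm_of_real abs_of_nonneg[OF nn[OF k]])
  qed
  also have "\<dots> = (real K)^3 * \<bar>t\<bar>^3 / 6" by (simp only: sum_distrib_right[symmetric] s1 mult_1_left)
  finally show ?thesis .
qed

lemma one_minus_power_le:
  fixes y :: real
  assumes "0 < y" "y \<le> 1" "1 \<le> n"
  shows "(1 - y)^n \<le> 1 / (real n * y)"
proof -
  have "(1 - y)^n * (1 + y)^n = (1 - y^2)^n" by (simp add: power_mult_distrib[symmetric] power2_eq_square algebra_simps)
  also have "\<dots> \<le> 1" using assms by (intro power_le_one) (auto simp: power_le_one)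
  finally have 1: "(1 - y)^n * (1 + y)^n \<le> 1" .
  have "1 + real n * y \<le> (1 + y)^n" using assms by (intro Bernoulli_inequality) auto
  then have "(1 - y)^n * (1 + real n * y) \<le> (1 - y)^n * (1 + y)^n"
    using assms by (intro mult_left_mono) auto
  with 1 have "(1 - y)^n * (1 + real n * y) \<le> 1" by linarith
  moreover have "(1 - y)^n * (real n * y) \<le> (1 - y)^n * (1 + real n * y)"
    using assms by (intro mult_left_mono) auto
  ultimately have "(1 - y)^n * (real n * y) \<le> 1" by linarith
  moreover have "0 < real n * y" using assms by simp
  ultimately show ?thesis by (simp add: field_simps)
qed

lemma has_integral_inverse_square:
  fixes p q c :: real
  assumes "p \<le> q" "0 < p \<or> q < 0" "c \<noteq> 0"
  shows "((\<lambda>t. 1 / (c * t^2)) has_integral (1/c) * (1/p - 1/q)) {p..q}"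
proof -
  have nz: "t \<in> {p..q} \<Longrightarrow> t \<noteq> 0" for t using assms by auto
  have "((\<lambda>t. - (1 / (c * t))) has_vector_derivative 1 / (c * t^2)) (at t within {p..q})" if "t \<in> {p..q}" for t
  proof -
    have "((\<lambda>t. - (1 / (c * t))) has_real_derivative 1 / (c * t^2)) (at t within {p..q})"
      using nz[OF that] assms(3)
      by (auto intro!: derivative_eq_intros simp: power2_eq_square field_simps)
    then show ?thesis by (simp add: has_real_derivative_iff_has_vector_derivative)
  qed
  then have "((\<lambda>t. 1 / (c * t^2)) has_integral (- (1 / (c * q)) - (- (1 / (c * p))))) {p..q}"
    using assms(1) by (intro fundamental_theorem_of_calculus) auto
  moreover have "- (1 / (c * q)) - (- (1 / (c * p))) = (1/c) * (1/p - 1/q)"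
  proof -
    have "p \<noteq> 0" "q \<noteq> 0" using assms by auto
    then show ?thesis using assms(3) by (simp add: field_simps)
  qed
  ultimately show ?thesis by simp
qed

lemma norm_integral_le_inverse_square:
  fixes f :: "real \<Rightarrow> complex" and p q c :: real
  assumes "p \<le> q" "0 < p \<or> q < 0" "0 < c" "continuous_on {p..q} f"
    and "\<And>t. t \<in> {p..q} \<Longrightarrow> cmod (f t) \<le> 1 / (c * t^2)"
  shows "cmod (integral {p..q} f) \<le> (1/c) * (1/p - 1/q)"
proof -
  have hi: "((\<lambda>t. 1 / (c * t^2)) has_integral (1/c) * (1/p - 1/q)) {p..q}"
    using assms by (intro has_integral_inverse_square) auto
  have "cmod (integral {p..q} f) \<le> integral {p..q} (\<lambda>t. 1 / (c * t^2))"
    using hi assms by (intro integral_norm_bound_integral) (auto intro: integrable_continuous_interval has_integral_integrable)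
  also have "\<dots> = (1/c) * (1/p - 1/q)" using hi by (rule integral_unique)
  finally show ?thesis .
qed

lemma norm_iexp_minus_one_le: "cmod (iexp y - 1) \<le> \<bar>y\<bar>"
  using iexp_approx1[of y 0] by simp

section \<open>A local limit theorem uniform over aperiodic weights\<close>

(* Fourier inversion, with the integral split at |t| = A / sqrt n: on the central part the centred
   characteristic function is within O(|t|^3) of the Gaussian factor 1 - var t^2 / 2, and on the
   tails |char_fun t| <= 1 - alpha^2 t^2 / 12 makes the contribution O(1 / (A sqrt n)). *)
context
  fixes K n :: nat and \<alpha> A :: real and w :: "int \<Rightarrow> real"
  assumes K: "1 \<le> K" and w: "aperiodic_weights K \<alpha> w" and \<alpha>: "0 < \<alpha>" and A: "1 \<le> A" and n: "1 \<le> n"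
    and nA: "(real K * A)^2 \<le> real n"
begin

private lemma w_nn: "k \<in> step_range K \<Longrightarrow> 0 \<le> w k" using w by (auto simp: aperiodic_weights_def)
private lemma w_s1: "(\<Sum>k\<in>step_range K. w k) = 1" using w by (auto simp: aperiodic_weights_def)

private lemma sqn_pos: "0 < sqrt (real n)" using n by simp

private lemma KA_le: "real K * A \<le> sqrt (real n)"
  using nA K A by (intro real_le_rsqrt) auto

private lemma a_pos: "0 < A / sqrt (real n)" using A sqn_pos by simp

private lemma a_le: "A / sqrt (real n) \<le> 1 / real K"
  using KA_le sqn_pos K by (simp add: field_simps)

private lemma a_le_pi: "A / sqrt (real n) \<le> pi"
proof -
  have "1 / real K \<le> 1" using K by simp
  then show ?thesis using a_le pi_ge_two by linarith
qed

private lemma gauss_factor_bounds: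
  assumes t: "\<bar>t\<bar> \<le> A / sqrt (real n)"
  shows "0 \<le> 1 - var K w * t^2 / 2" "1 - var K w * t^2 / 2 \<le> 1"
proof -
  have v: "0 \<le> var K w" "var K w \<le> (real K)^2" using var_bounds[OF w_nn w_s1] by auto
  have "\<bar>t\<bar> \<le> 1 / real K" using t a_le by linarith
  then have "\<bar>t\<bar>^2 \<le> (1 / real K)^2" by (intro power_mono) auto
  then have t2: "t^2 \<le> 1 / (real K)^2" by (simp add: power_divide)
  have "var K w * t^2 \<le> (real K)^2 * (1 / (real K)^2)"
    using v t2 by (intro mult_mono) auto
  also have "\<dots> = 1" using K by simp
  finally have "var K w * t^2 \<le> 1" .
  moreover have "0 \<le> var K w * t^2" using v by simp
  ultimately show "0 \<le> 1 - var K w * t^2 / 2" "1 - var K w * t^2 / 2 \<le> 1" by auto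
qed

private lemma centred_char_fun_power_diff:
  assumes t: "\<bar>t\<bar> \<le> A / sqrt (real n)"
  shows "cmod (centred_char_fun K w t ^ n - complex_of_real ((1 - var K w * t^2 / 2) ^ n)) \<le> (real K)^3 * A^3 / (6 * sqrt (real n))"
proof -
  have tp: "\<bar>t\<bar> \<le> pi" using t a_le_pi by linarith
  have p1: "cmod (centred_char_fun K w t) \<le> 1"
  proof -
    have "cmod (char_fun K w t) \<le> 1 - \<alpha>^2 * (t^2/12)" using norm_char_fun_le[OF K w tp] \<alpha> by simp
    also have "\<dots> \<le> 1" by simp
    finally show ?thesis by (simp add: norm_centred_char_fun)
  qed
  have g1: "cmod (complex_of_real (1 - var K w * t^2 / 2)) \<le> 1"
  proof -
    have "\<bar>1 - var K w * t^2 / 2\<bar> \<le> 1" using gauss_factor_bounds[OF t] by (simp add: abs_le_iff)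
    then show ?thesis by (simp only: norm_of_real)
  qed
  have "cmod (centred_char_fun K w t ^ n - complex_of_real ((1 - var K w * t^2 / 2) ^ n))
      = cmod (centred_char_fun K w t ^ n - complex_of_real (1 - var K w * t^2 / 2) ^ n)" by simp
  also have "\<dots> \<le> real n * cmod (centred_char_fun K w t - complex_of_real (1 - var K w * t^2 / 2))"
    by (rule norm_power_diff_le[OF p1 g1])
  also have "\<dots> \<le> real n * ((real K)^3 * \<bar>t\<bar>^3 / 6)"
    by (intro mult_left_mono centred_char_fun_taylor[OF w_nn w_s1]) auto
  also have "\<dots> \<le> real n * ((real K)^3 * (A / sqrt (real n))^3 / 6)"
    using t by (intro mult_left_mono divide_right_mono power_mono) auto
  also have "\<dots> = (real K)^3 * A^3 / (6 * sqrt (real n))"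
  proof -
    have "real n = sqrt (real n) * sqrt (real n)" by simp
    then show ?thesis using sqn_pos by (simp add: field_simps power3_eq_cube)
  qed
  finally show ?thesis .
qed

private lemma alpha_le_half: "\<alpha> \<le> 1/2"
proof -
  have "(\<Sum>k\<in>{-1,0}. w k) \<le> (\<Sum>k\<in>step_range K. w k)"
    using K w_nn by (intro sum_mono2) (auto simp: step_range_def)
  then have "w (-1) + w 0 \<le> 1" using w_s1 by simp
  moreover have "\<alpha> \<le> w (-1)" "\<alpha> \<le> w 0" using w by (auto simp: aperiodic_weights_def)
  ultimately show ?thesis by linarith
qed

private lemma inversion_integrand_tail:
  assumes t1: "A / sqrt (real n) \<le> \<bar>t\<bar>" and t2: "\<bar>t\<bar> \<le> pi"
  shows "cmod (char_fun K w t ^ n * iexp (- (t * of_int z))) \<le> 1 / ((real n * \<alpha>^2 / 12) * t^2)"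
proof -
  define y where "y = \<alpha>^2 * (t^2/12)"
  have tpos: "0 < \<bar>t\<bar>" using t1 a_pos by linarith
  have ypos: "0 < y" unfolding y_def using \<alpha> tpos by simp
  have "t^2 \<le> 16"
  proof -
    have "\<bar>t\<bar> \<le> 4" using t2 pi_less_4 by linarith
    then have "\<bar>t\<bar>^2 \<le> 4^2" by (intro power_mono) auto
    then show ?thesis by simp
  qed
  moreover have "\<alpha>^2 \<le> (1/2)^2" using alpha_le_half \<alpha> by (intro power_mono) auto
  ultimately have "\<alpha>^2 * (t^2/12) \<le> (1/2)^2 * (16/12)" by (intro mult_mono) auto
  moreover have "(1/2::real)^2 * (16/12) \<le> 1" by (simp add: power2_eq_square)
  ultimately have y1: "y \<le> 1" unfolding y_def by linarith
  have c: "cmod (char_fun K w t) \<le> 1 - y" unfolding y_def using norm_char_fun_le[OF K w t2] \<alpha> by simp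
  have "cmod (char_fun K w t ^ n * iexp (- (t * of_int z))) = cmod (char_fun K w t) ^ n"
    by (simp add: norm_mult norm_power)
  also have "\<dots> \<le> (1 - y) ^ n" using c by (intro power_mono) auto
  also have "\<dots> \<le> 1 / (real n * y)" using ypos y1 n by (intro one_minus_power_le) auto
  also have "real n * y = (real n * \<alpha>^2 / 12) * t^2" unfolding y_def by simp
  finally show ?thesis .
qed

private lemma continuous_on_inversion_integrand: "continuous_on S (\<lambda>t. char_fun K w t ^ n * iexp (- (t * of_int z)))"
  by (intro continuous_intros)

private lemma inversion_integral_tails:
  shows "cmod (integral {A / sqrt (real n)..pi} (\<lambda>t. char_fun K w t ^ n * iexp (- (t * of_int z)))) \<le> 12 / (\<alpha>^2 * A * sqrt (real n))"
    and "cmod (integral {-pi..-(A / sqrt (real n))} (\<lambda>t. char_fun K w t ^ n * iexp (- (t * of_int z)))) \<le> 12 / (\<alpha>^2 * A * sqrt (real n))"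
proof -
  let ?a = "A / sqrt (real n)"
  let ?c = "real n * \<alpha>^2 / 12"
  have cpos: "0 < ?c" using n \<alpha> by simp
  have key: "(1/?c) * (1/?a - 1/pi) \<le> 12 / (\<alpha>^2 * A * sqrt (real n))"
  proof -
    have "(1/?c) * (1/?a - 1/pi) \<le> (1/?c) * (1/?a)"
      using cpos by (intro mult_left_mono) auto
    also have "\<dots> = 12 / (\<alpha>^2 * A * sqrt (real n))"
    proof -
      have "real n = sqrt (real n) * sqrt (real n)" by simp
      then show ?thesis using sqn_pos \<alpha> A by (simp add: field_simps)
    qed
    finally show ?thesis .
  qed
  have "cmod (integral {?a..pi} (\<lambda>t. char_fun K w t ^ n * iexp (- (t * of_int z)))) \<le> (1/?c) * (1/?a - 1/pi)"
    using a_le_pi a_pos cpos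
    by (intro norm_integral_le_inverse_square continuous_on_inversion_integrand inversion_integrand_tail) auto
  then show "cmod (integral {?a..pi} (\<lambda>t. char_fun K w t ^ n * iexp (- (t * of_int z)))) \<le> 12 / (\<alpha>^2 * A * sqrt (real n))"
    using key by linarith
  have "cmod (integral {-pi..-?a} (\<lambda>t. char_fun K w t ^ n * iexp (- (t * of_int z)))) \<le> (1/?c) * (1/(-pi) - 1/(-?a))"
    using a_le_pi a_pos cpos
    by (intro norm_integral_le_inverse_square continuous_on_inversion_integrand inversion_integrand_tail) auto
  then show "cmod (integral {-pi..-?a} (\<lambda>t. char_fun K w t ^ n * iexp (- (t * of_int z)))) \<le> 12 / (\<alpha>^2 * A * sqrt (real n))"
    using key by simp
qed

private lemma inversion_integral_split:
  "integral {-pi..pi} (\<lambda>t. char_fun K w t ^ n * iexp (- (t * of_int z))) =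
     integral {-pi..-(A / sqrt (real n))} (\<lambda>t. char_fun K w t ^ n * iexp (- (t * of_int z)))
   + integral {-(A / sqrt (real n))..A / sqrt (real n)} (\<lambda>t. char_fun K w t ^ n * iexp (- (t * of_int z)))
   + integral {A / sqrt (real n)..pi} (\<lambda>t. char_fun K w t ^ n * iexp (- (t * of_int z)))"
proof -
  let ?a = "A / sqrt (real n)"
  let ?F = "\<lambda>t. char_fun K w t ^ n * iexp (- (t * of_int z))"
  have i: "?F integrable_on {p..q}" for p q by (intro integrable_continuous_interval continuous_on_inversion_integrand)
  have 1: "integral {-pi..-?a} ?F + integral {-?a..pi} ?F = integral {-pi..pi} ?F"
    by (rule Henstock_Kurzweil_Integration.integral_combine) (use a_le_pi a_pos i in auto)
  have 2: "integral {-?a..?a} ?F + integral {?a..pi} ?F = integral {-?a..pi} ?F"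
    by (rule Henstock_Kurzweil_Integration.integral_combine) (use a_le_pi a_pos i in auto)
  show ?thesis using 1 2 by (simp add: add.assoc)
qed

private lemma integral_gauss_factor_of_real: "integral {-(A / sqrt (real n))..A / sqrt (real n)} (\<lambda>t. complex_of_real ((1 - var K w * t^2 / 2) ^ n))
    = complex_of_real (integral {-(A / sqrt (real n))..A / sqrt (real n)} (\<lambda>t. (1 - var K w * t^2 / 2) ^ n))"
proof -
  have "((\<lambda>t. (1 - var K w * t^2 / 2) ^ n) has_integral integral {-(A / sqrt (real n))..A / sqrt (real n)} (\<lambda>t. (1 - var K w * t^2 / 2) ^ n)) {-(A / sqrt (real n))..A / sqrt (real n)}"
    by (intro integrable_integral integrable_continuous_interval continuous_intros) simp
  from has_integral_of_real[OF this] show ?thesis by (rule integral_unique)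
qed

private lemma central_integral_upper:
  "cmod (integral {-(A / sqrt (real n))..A / sqrt (real n)} (\<lambda>t. char_fun K w t ^ n * iexp (- (t * of_int z))))
    \<le> integral {-(A / sqrt (real n))..A / sqrt (real n)} (\<lambda>t. (1 - var K w * t^2 / 2) ^ n)
      + (real K)^3 * A^3 / (6 * sqrt (real n)) * (2 * (A / sqrt (real n)))"
proof -
  let ?a = "A / sqrt (real n)"
  let ?x = "of_int z - real n * mean K w"
  let ?G = "\<lambda>t. (1 - var K w * t^2 / 2) ^ n"
  let ?D = "\<lambda>t. (centred_char_fun K w t ^ n - complex_of_real (?G t)) * iexp (- (t * ?x))"
  let ?E = "\<lambda>t. complex_of_real (?G t) * iexp (- (t * ?x))"
  have eq: "(\<lambda>t. char_fun K w t ^ n * iexp (- (t * of_int z))) = (\<lambda>t. ?D t + ?E t)"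
    by (rule ext) (simp only: inversion_integrand_centred algebra_simps)
  have iD: "?D integrable_on {-?a..?a}" by (intro integrable_continuous_interval continuous_intros; simp)
  have iE: "?E integrable_on {-?a..?a}" by (intro integrable_continuous_interval continuous_intros; simp)
  have iG: "?G integrable_on {-?a..?a}" by (intro integrable_continuous_interval continuous_intros; simp)
  have "integral {-?a..?a} (\<lambda>t. ?D t + ?E t) = integral {-?a..?a} ?D + integral {-?a..?a} ?E"
    by (rule integral_add[OF iD iE])
  then have "cmod (integral {-?a..?a} (\<lambda>t. ?D t + ?E t)) \<le> cmod (integral {-?a..?a} ?D) + cmod (integral {-?a..?a} ?E)"
    by (simp add: norm_triangle_ineq)
  moreover have "cmod (integral {-?a..?a} ?D) \<le> (real K)^3 * A^3 / (6 * sqrt (real n)) * (?a - (-?a))"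
  proof (rule integral_bound)
    show "-?a \<le> ?a" using a_pos by simp
    show "continuous_on {-?a..?a} ?D" by (intro continuous_intros) simp_all
    fix t assume "t \<in> {-?a..?a}"
    then have t: "\<bar>t\<bar> \<le> ?a" by auto
    show "cmod (?D t) \<le> (real K)^3 * A^3 / (6 * sqrt (real n))"
      using centred_char_fun_power_diff[OF t] by (simp add: norm_mult)
  qed
  moreover have "cmod (integral {-?a..?a} ?E) \<le> integral {-?a..?a} ?G"
  proof (rule integral_norm_bound_integral[OF iE iG])
    fix t assume "t \<in> {-?a..?a}"
    then have t: "\<bar>t\<bar> \<le> ?a" by auto
    have g0: "0 \<le> ?G t" using gauss_factor_bounds[OF t] by simp
    have "cmod (?E t) = cmod (complex_of_real (?G t)) * cmod (iexp (- (t * ?x)))" by (rule norm_mult)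
    also have "\<dots> = ?G t" by (simp only: norm_of_real norm_exp_i_times abs_of_nonneg[OF g0] mult_1_right)
    finally show "cmod (?E t) \<le> ?G t" by simp
  qed
  ultimately show ?thesis unfolding eq by simp
qed

private lemma central_integral_lower:
  assumes x: "\<bar>of_int z - real n * mean K w\<bar> \<le> 1"
  shows "cmod (integral {-(A / sqrt (real n))..A / sqrt (real n)} (\<lambda>t. char_fun K w t ^ n * iexp (- (t * of_int z)))
      - complex_of_real (integral {-(A / sqrt (real n))..A / sqrt (real n)} (\<lambda>t. (1 - var K w * t^2 / 2) ^ n)))
    \<le> ((real K)^3 * A^3 / (6 * sqrt (real n)) + A / sqrt (real n)) * (2 * (A / sqrt (real n)))"
proof -
  let ?a = "A / sqrt (real n)"
  let ?x = "of_int z - real n * mean K w"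
  let ?G = "\<lambda>t. (1 - var K w * t^2 / 2) ^ n"
  let ?F = "\<lambda>t. char_fun K w t ^ n * iexp (- (t * of_int z))"
  let ?Gc = "\<lambda>t. complex_of_real (?G t)"
  have iF: "?F integrable_on {-?a..?a}" by (intro integrable_continuous_interval continuous_intros; simp)
  have iG: "?Gc integrable_on {-?a..?a}" by (intro integrable_continuous_interval continuous_intros; simp)
  have "integral {-?a..?a} ?F - complex_of_real (integral {-?a..?a} ?G) = integral {-?a..?a} (\<lambda>t. ?F t - ?Gc t)"
    unfolding integral_gauss_factor_of_real[symmetric] by (rule integral_diff[OF iF iG, symmetric])
  moreover have "cmod (integral {-?a..?a} (\<lambda>t. ?F t - ?Gc t)) \<le> ((real K)^3 * A^3 / (6 * sqrt (real n)) + ?a) * (?a - (-?a))"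
  proof (rule integral_bound)
    show "-?a \<le> ?a" using a_pos by simp
    show "continuous_on {-?a..?a} (\<lambda>t. ?F t - ?Gc t)" by (intro continuous_intros) simp_all
    fix t assume "t \<in> {-?a..?a}"
    then have t: "\<bar>t\<bar> \<le> ?a" by auto
    have eq: "?F t - ?Gc t = (centred_char_fun K w t ^ n - ?Gc t) * iexp (- (t * ?x)) + ?Gc t * (iexp (- (t * ?x)) - 1)"
      by (simp only: inversion_integrand_centred algebra_simps mult_1_left)
    have "cmod ((centred_char_fun K w t ^ n - ?Gc t) * iexp (- (t * ?x))) \<le> (real K)^3 * A^3 / (6 * sqrt (real n))"
      using centred_char_fun_power_diff[OF t] by (simp add: norm_mult)
    moreover have "cmod (?Gc t * (iexp (- (t * ?x)) - 1)) \<le> ?a"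
    proof -
      have g01: "0 \<le> ?G t" "?G t \<le> 1" using gauss_factor_bounds[OF t] by (auto intro: power_le_one)
      have "cmod (iexp (- (t * ?x)) - 1) \<le> \<bar>- (t * ?x)\<bar>" by (rule norm_iexp_minus_one_le)
      also have "\<dots> = \<bar>t\<bar> * \<bar>?x\<bar>" by (simp add: abs_mult)
      also have "\<dots> \<le> ?a * 1" using t x by (intro mult_mono) auto
      finally have "cmod (iexp (- (t * ?x)) - 1) \<le> ?a" by simp
      then have "?G t * cmod (iexp (- (t * ?x)) - 1) \<le> 1 * ?a"
        using g01 a_pos by (intro mult_mono) auto
      moreover have "cmod (?Gc t * (iexp (- (t * ?x)) - 1)) = ?G t * cmod (iexp (- (t * ?x)) - 1)"
        by (simp only: norm_mult norm_of_real abs_of_nonneg[OF g01(1)])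
      ultimately show ?thesis by simp
    qed
    ultimately show "cmod (?F t - ?Gc t) \<le> (real K)^3 * A^3 / (6 * sqrt (real n)) + ?a"
      unfolding eq by (meson add_mono norm_triangle_ineq order_trans)
  qed
  ultimately show ?thesis by simp
qed

lemma local_limit_upper:
  "sqrt (real n) * conv_pow K w n z \<le> sqrt (real n) / (2*pi) * integral {-(A / sqrt (real n))..A / sqrt (real n)} (\<lambda>t. (1 - var K w * t^2 / 2) ^ n)
     + A^4 * (real K)^3 / (6 * pi * sqrt (real n)) + 12 / (pi * \<alpha>^2 * A)"
proof -
  let ?a = "A / sqrt (real n)"
  let ?F = "\<lambda>t. char_fun K w t ^ n * iexp (- (t * of_int z))"
  let ?IG = "integral {-?a..?a} (\<lambda>t. (1 - var K w * t^2 / 2) ^ n)"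
  let ?T = "12 / (\<alpha>^2 * A * sqrt (real n))"
  let ?X = "(real K)^3 * A^3 / (6 * sqrt (real n))"
  have "Re (integral {-pi..pi} ?F) \<le> cmod (integral {-pi..pi} ?F)" by (rule complex_Re_le_cmod)
  also have "\<dots> \<le> cmod (integral {-pi..-?a} ?F) + cmod (integral {-?a..?a} ?F) + cmod (integral {?a..pi} ?F)"
    unfolding inversion_integral_split by (meson add_mono norm_triangle_ineq order_trans order_refl)
  also have "\<dots> \<le> ?T + (?IG + ?X * (2 * ?a)) + ?T"
    using inversion_integral_tails[of z] central_integral_upper[of z] by (intro add_mono) auto
  finally have 1: "Re (integral {-pi..pi} ?F) \<le> ?T + (?IG + ?X * (2 * ?a)) + ?T" .
  have "sqrt (real n) * conv_pow K w n z = sqrt (real n) / (2*pi) * Re (integral {-pi..pi} ?F)"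
    by (simp add: conv_pow_eq_Re_integral)
  also have "\<dots> \<le> sqrt (real n) / (2*pi) * (?T + (?IG + ?X * (2 * ?a)) + ?T)"
    using 1 sqn_pos by (intro mult_left_mono) auto
  also have "\<dots> = sqrt (real n) / (2*pi) * ?IG + A^4 * (real K)^3 / (6 * pi * sqrt (real n)) + 12 / (pi * \<alpha>^2 * A)"
    using sqn_pos \<alpha> A by (simp add: field_simps power2_eq_square power3_eq_cube power4_eq_xxxx)
  finally show ?thesis .
qed

lemma local_limit_lower:
  assumes x: "\<bar>of_int z - real n * mean K w\<bar> \<le> 1"
  shows "sqrt (real n) / (2*pi) * integral {-(A / sqrt (real n))..A / sqrt (real n)} (\<lambda>t. (1 - var K w * t^2 / 2) ^ n)
     - (A^4 * (real K)^3 / (6 * pi * sqrt (real n)) + A^2 / (pi * sqrt (real n))) - 12 / (pi * \<alpha>^2 * A)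
     \<le> sqrt (real n) * conv_pow K w n z"
proof -
  let ?a = "A / sqrt (real n)"
  let ?F = "\<lambda>t. char_fun K w t ^ n * iexp (- (t * of_int z))"
  let ?IG = "integral {-?a..?a} (\<lambda>t. (1 - var K w * t^2 / 2) ^ n)"
  let ?T = "12 / (\<alpha>^2 * A * sqrt (real n))"
  let ?X = "(real K)^3 * A^3 / (6 * sqrt (real n))"
  have eq: "integral {-pi..pi} ?F - complex_of_real ?IG = integral {-pi..-?a} ?F + (integral {-?a..?a} ?F - complex_of_real ?IG) + integral {?a..pi} ?F"
    unfolding inversion_integral_split by simp
  have "cmod (integral {-pi..pi} ?F - complex_of_real ?IG) \<le> cmod (integral {-pi..-?a} ?F) + cmod (integral {-?a..?a} ?F - complex_of_real ?IG) + cmod (integral {?a..pi} ?F)"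
    unfolding eq by (meson add_mono norm_triangle_ineq order_trans order_refl)
  also have "\<dots> \<le> ?T + (?X + ?a) * (2 * ?a) + ?T"
    using inversion_integral_tails[of z] central_integral_lower[OF x] by (intro add_mono) auto
  finally have 1: "cmod (integral {-pi..pi} ?F - complex_of_real ?IG) \<le> ?T + (?X + ?a) * (2 * ?a) + ?T" .
  have "Re (complex_of_real ?IG - integral {-pi..pi} ?F) \<le> cmod (complex_of_real ?IG - integral {-pi..pi} ?F)"
    by (rule complex_Re_le_cmod)
  also have "\<dots> = cmod (integral {-pi..pi} ?F - complex_of_real ?IG)" by (rule norm_minus_commute)
  finally have "?IG - Re (integral {-pi..pi} ?F) \<le> ?T + (?X + ?a) * (2 * ?a) + ?T" using 1 by simp
  then have 2: "?IG - (?T + (?X + ?a) * (2 * ?a) + ?T) \<le> Re (integral {-pi..pi} ?F)" by linarith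
  have "sqrt (real n) / (2*pi) * ?IG - (A^4 * (real K)^3 / (6 * pi * sqrt (real n)) + A^2 / (pi * sqrt (real n))) - 12 / (pi * \<alpha>^2 * A)
      = sqrt (real n) / (2*pi) * (?IG - (?T + (?X + ?a) * (2 * ?a) + ?T))"
    using sqn_pos \<alpha> A by (simp add: field_simps power2_eq_square power3_eq_cube power4_eq_xxxx)
  also have "\<dots> \<le> sqrt (real n) / (2*pi) * Re (integral {-pi..pi} ?F)"
    using 2 sqn_pos by (intro mult_left_mono) auto
  also have "\<dots> = sqrt (real n) * conv_pow K w n z" by (simp add: conv_pow_eq_Re_integral)
  finally show ?thesis .
qed

lemma local_limit_density_lower:
  "1 / (2 * pi * real K) \<le> sqrt (real n) / (2*pi) * integral {-(A / sqrt (real n))..A / sqrt (real n)} (\<lambda>t. (1 - var K w * t^2 / 2) ^ n)"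
proof -
  let ?a = "A / sqrt (real n)"
  let ?b = "1 / (real K * sqrt (real n))"
  let ?G = "\<lambda>t. (1 - var K w * t^2 / 2) ^ n"
  have bpos: "0 < ?b" using K sqn_pos by simp
  have "1 * 1 \<le> A * real K" using A K by (intro mult_mono) auto
  then have ba: "?b \<le> ?a" using K sqn_pos A by (simp add: field_simps)
  have iG: "?G integrable_on {p..q}" for p q by (intro integrable_continuous_interval continuous_intros; simp)
  have "integral {-?b..?b} (\<lambda>t. 1/2) \<le> integral {-?b..?b} ?G"
  proof (rule integral_le)
    show "(\<lambda>t. 1/2::real) integrable_on {-?b..?b}" by (rule integrable_const_ivl)
    show "?G integrable_on {-?b..?b}" by (rule iG)
    fix t assume "t \<in> {-?b..?b}"
    then have tb: "\<bar>t\<bar> \<le> ?b" by auto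
    have v: "0 \<le> var K w" "var K w \<le> (real K)^2" using var_bounds[OF w_nn w_s1] by auto
    have "\<bar>t\<bar>^2 \<le> ?b^2" using tb by (intro power_mono) auto
    then have t2: "t^2 \<le> ?b^2" by simp
    have "var K w * t^2 \<le> (real K)^2 * ?b^2" using v t2 by (intro mult_mono) auto
    also have "\<dots> = 1 / real n" using K sqn_pos by (simp add: field_simps power2_eq_square)
    finally have vt: "var K w * t^2 \<le> 1 / real n" .
    have "1 - 1 / (2 * real n) \<le> 1 - var K w * t^2 / 2" using vt by simp
    moreover have "0 \<le> 1 - 1 / (2 * real n)" using n by simp
    ultimately have "(1 - 1 / (2 * real n)) ^ n \<le> ?G t" by (intro power_mono) auto
    moreover have "1 + real n * (- (1 / (2 * real n))) \<le> (1 + (- (1 / (2 * real n)))) ^ n"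
      using n by (intro Bernoulli_inequality) simp
    moreover have "1 + real n * (- (1 / (2 * real n))) = 1/2" using n by simp
    ultimately show "1/2 \<le> ?G t" by simp
  qed
  moreover have "integral {-?b..?b} (\<lambda>t. 1/2::real) = ?b" using bpos by simp
  moreover have "integral {-?b..?b} ?G \<le> integral {-?a..?a} ?G"
  proof (rule integral_subset_le)
    show "{-?b..?b} \<subseteq> {-?a..?a}" using ba by auto
    show "?G integrable_on {-?b..?b}" by (rule iG)
    show "?G integrable_on {-?a..?a}" by (rule iG)
    show "\<forall>x\<in>{-?a..?a}. 0 \<le> ?G x" using gauss_factor_bounds by auto
  qed
  ultimately have "?b \<le> integral {-?a..?a} ?G" by linarith
  then have "sqrt (real n) / (2*pi) * ?b \<le> sqrt (real n) / (2*pi) * integral {-?a..?a} ?G"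
    using sqn_pos by (intro mult_left_mono) auto
  moreover have "sqrt (real n) / (2*pi) * ?b = 1 / (2 * pi * real K)" using sqn_pos K by (simp add: field_simps)
  ultimately show ?thesis by simp
qed

end

lemma uniform_local_limit:
  assumes K: "1 \<le> K" and \<alpha>: "0 < \<alpha>" and \<eta>: "0 < \<eta>"
  obtains N where "\<And>n w. N \<le> n \<Longrightarrow> aperiodic_weights K \<alpha> w \<Longrightarrow>
     \<exists>H. 1 / (2 * pi * real K) \<le> H \<and> (\<forall>z. sqrt (real n) * conv_pow K w n z \<le> H + \<eta>) \<and>
          (\<forall>z. \<bar>of_int z - real n * mean K w\<bar> \<le> 1 \<longrightarrow> H - \<eta> \<le> sqrt (real n) * conv_pow K w n z)"
proof -
  define A where "A = max 1 (24 / (pi * \<alpha>^2 * \<eta>))"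
  have A1: "1 \<le> A" unfolding A_def by simp
  have Apos: "0 < A" using A1 by simp
  have tailA: "12 / (pi * \<alpha>^2 * A) \<le> \<eta> / 2"
  proof -
    have "24 / (pi * \<alpha>^2 * \<eta>) \<le> A" unfolding A_def by simp
    then have "24 \<le> A * (pi * \<alpha>^2 * \<eta>)" using \<alpha> \<eta> by (simp add: field_simps)
    then show ?thesis using \<alpha> \<eta> Apos by (simp add: field_simps)
  qed
  define c where "c = A^4 * (real K)^3 / (6 * pi) + A^2 / pi"
  define N where "N = max 1 (nat \<lceil>max ((real K * A)^2) ((2 * c / \<eta>)^2)\<rceil>)"
  show thesis
  proof (rule that)
    fix n w assume nN: "N \<le> n" and w: "aperiodic_weights K \<alpha> w"
    have n1: "1 \<le> n" using nN unfolding N_def by simp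
    have "max ((real K * A)^2) ((2 * c / \<eta>)^2) \<le> real N"
      unfolding N_def by (metis max.cobounded2 of_nat_le_iff order_trans real_nat_ceiling_ge of_nat_max)
    then have nb: "(real K * A)^2 \<le> real n" "(2 * c / \<eta>)^2 \<le> real n" using nN by (auto intro: order_trans)
    have sp: "0 < sqrt (real n)" using n1 by simp
    have "2 * c / \<eta> \<le> sqrt (real n)" using nb(2) by (intro real_le_rsqrt) auto
    then have cn: "c / sqrt (real n) \<le> \<eta> / 2" using sp \<eta> by (simp add: field_simps)
    have e1: "A^4 * (real K)^3 / (6 * pi * sqrt (real n)) \<le> \<eta> / 2"
    proof -
      have "A^4 * (real K)^3 / (6 * pi * sqrt (real n)) = (A^4 * (real K)^3 / (6 * pi)) / sqrt (real n)" by simp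
      also have "\<dots> \<le> c / sqrt (real n)" unfolding c_def using sp by (intro divide_right_mono) auto
      finally show ?thesis using cn by linarith
    qed
    have e2: "A^4 * (real K)^3 / (6 * pi * sqrt (real n)) + A^2 / (pi * sqrt (real n)) \<le> \<eta> / 2"
    proof -
      have "A^4 * (real K)^3 / (6 * pi * sqrt (real n)) + A^2 / (pi * sqrt (real n)) = c / sqrt (real n)"
        unfolding c_def by (simp add: add_divide_distrib)
      then show ?thesis using cn by simp
    qed
    define H where "H = sqrt (real n) / (2*pi) * integral {-(A / sqrt (real n))..A / sqrt (real n)} (\<lambda>t. (1 - var K w * t^2 / 2) ^ n)"
    show "\<exists>H. 1 / (2 * pi * real K) \<le> H \<and> (\<forall>z. sqrt (real n) * conv_pow K w n z \<le> H + \<eta>) \<and>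
          (\<forall>z. \<bar>of_int z - real n * mean K w\<bar> \<le> 1 \<longrightarrow> H - \<eta> \<le> sqrt (real n) * conv_pow K w n z)"
    proof (intro exI[of _ H] conjI allI impI)
      show "1 / (2 * pi * real K) \<le> H" unfolding H_def by (rule local_limit_density_lower[OF K w \<alpha> A1 n1 nb(1)])
      fix z
      show "sqrt (real n) * conv_pow K w n z \<le> H + \<eta>"
        using local_limit_upper[OF K w \<alpha> A1 n1 nb(1), of z] e1 tailA unfolding H_def by linarith
      assume x: "\<bar>of_int z - real n * mean K w\<bar> \<le> 1"
      show "H - \<eta> \<le> sqrt (real n) * conv_pow K w n z"
        using local_limit_lower[OF K w \<alpha> A1 n1 nb(1) x] e2 tailA unfolding H_def by linarith
    qed
  qed
qed

section \<open>Exponential tilting\<close>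

lemma abs_exp_minus_one_le:
  fixes y :: real
  shows "\<bar>exp y - 1\<bar> \<le> \<bar>y\<bar> * exp \<bar>y\<bar>"
proof (cases "0 \<le> y")
  case True
  have "1 - y \<le> exp (-y)" by (rule exp_minus_ge)
  then have "exp y * (1 - y) \<le> exp y * exp (-y)" by (intro mult_left_mono) auto
  then have "exp y - y * exp y \<le> 1" by (simp add: exp_minus_inverse algebra_simps)
  then show ?thesis using True by simp
next
  case False
  have f1: "1 + y \<le> exp y" by (rule exp_ge_add_one_self)
  have f2: "exp y \<le> 1" using False by simp
  have "1 \<le> exp (-y)" using False by simp
  then have f3: "(-y) * 1 \<le> (-y) * exp (-y)" using False by (intro mult_left_mono) auto
  have "\<bar>exp y - 1\<bar> = 1 - exp y" using f2 by simp
  moreover have "\<bar>y\<bar> * exp \<bar>y\<bar> = (-y) * exp (-y)" using False by simp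
  ultimately show ?thesis using f1 f3 by linarith
qed

definition mgf :: "nat \<Rightarrow> (int \<Rightarrow> real) \<Rightarrow> real \<Rightarrow> real" where
  "mgf K p \<theta> = (\<Sum>k\<in>step_range K. p k * exp (\<theta> * of_int k))"

definition tilted :: "nat \<Rightarrow> (int \<Rightarrow> real) \<Rightarrow> real \<Rightarrow> int \<Rightarrow> real" where
  "tilted K p \<theta> k = p k * exp (\<theta> * of_int k) / mgf K p \<theta>"

lemma abs_step_range_le: "k \<in> step_range K \<Longrightarrow> 1 \<le> K \<Longrightarrow> \<bar>of_int k\<bar> \<le> real K"
  by (auto simp: step_range_def)

lemma exp_le_quadratic: "\<bar>y::real\<bar> \<le> 1 \<Longrightarrow> exp y \<le> 1 + y + y^2"
proof (cases "0 \<le> y")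
  case True
  assume "\<bar>y\<bar> \<le> 1"
  then show ?thesis using exp_bound[of y] True by (simp add: power2_eq_square)
next
  case False
  assume y: "\<bar>y\<bar> \<le> 1"
  have "1 - y \<le> exp (-y)" by (rule exp_minus_ge)
  moreover have "0 < 1 - y" using False by simp
  ultimately have "exp y * (1 - y) \<le> exp y * exp (-y)" by (intro mult_left_mono) auto
  then have e: "exp y * (1 - y) \<le> 1" by (simp add: exp_minus_inverse)
  have "1 \<le> (1 + y + y^2) * (1 - y)"
  proof -
    have "(1 + y + y^2) * (1 - y) = 1 - y^3" by (simp add: power2_eq_square power3_eq_cube algebra_simps)
    moreover have "y^3 \<le> 0"
    proof -
      have "0 \<le> y * y" by simp
      then have "y * y * y \<le> 0" using False by (intro mult_nonneg_nonpos) auto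
      then show ?thesis by (simp add: power3_eq_cube)
    qed
    ultimately show ?thesis by simp
  qed
  with e have "exp y * (1 - y) \<le> (1 + y + y^2) * (1 - y)" by linarith
  then show ?thesis using \<open>0 < 1 - y\<close> by (simp add: mult_le_cancel_right)
qed

lemma mgf_le_exp_mean:
  assumes nn: "\<And>k. k \<in> step_range K \<Longrightarrow> 0 \<le> w k" and s1: "(\<Sum>k\<in>step_range K. w k) = 1"
    and h: "\<bar>h\<bar> * real K \<le> 1"
  shows "mgf K w h \<le> exp (h * mean K w + h^2 * (real K)^2)"
proof -
  let ?\<mu> = "mean K w"
  have "mgf K w h = exp (h * ?\<mu>) * (\<Sum>k\<in>step_range K. w k * exp (h * (of_int k - ?\<mu>)))"
    unfolding mgf_def sum_distrib_left by (intro sum.cong refl) (simp add: exp_add[symmetric] algebra_simps)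
  also have "(\<Sum>k\<in>step_range K. w k * exp (h * (of_int k - ?\<mu>))) \<le> (\<Sum>k\<in>step_range K. w k * (1 + h * (of_int k - ?\<mu>) + h^2 * (real K)^2))"
  proof (intro sum_mono mult_left_mono)
    fix k assume k: "k \<in> step_range K"
    show "0 \<le> w k" by (rule nn[OF k])
    have d: "\<bar>of_int k - ?\<mu>\<bar> \<le> real K" by (rule abs_dev_mean_le[OF nn s1 k])
    have y: "\<bar>h * (of_int k - ?\<mu>)\<bar> \<le> \<bar>h\<bar> * real K" unfolding abs_mult by (intro mult_left_mono d) auto
    then have "\<bar>h * (of_int k - ?\<mu>)\<bar> \<le> 1" using h by linarith
    then have "exp (h * (of_int k - ?\<mu>)) \<le> 1 + h * (of_int k - ?\<mu>) + (h * (of_int k - ?\<mu>))^2" by (rule exp_le_quadratic)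
    moreover have "(h * (of_int k - ?\<mu>))^2 \<le> h^2 * (real K)^2"
    proof -
      have "\<bar>h * (of_int k - ?\<mu>)\<bar>^2 \<le> (\<bar>h\<bar> * real K)^2" using y by (intro power_mono) auto
      then show ?thesis by (simp add: power_mult_distrib)
    qed
    ultimately show "exp (h * (of_int k - ?\<mu>)) \<le> 1 + h * (of_int k - ?\<mu>) + h^2 * (real K)^2" by linarith
  qed
  also have "(\<Sum>k\<in>step_range K. w k * (1 + h * (of_int k - ?\<mu>) + h^2 * (real K)^2)) = 1 + h^2 * (real K)^2"
  proof -
    have "(\<Sum>k\<in>step_range K. w k * (1 + h * (of_int k - ?\<mu>) + h^2 * (real K)^2))
       = (\<Sum>k\<in>step_range K. w k) * (1 + h^2 * (real K)^2) + h * ((\<Sum>k\<in>step_range K. of_int k * w k) - ?\<mu> * (\<Sum>k\<in>step_range K. w k))"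
      by (simp add: sum_distrib_left sum_distrib_right sum_subtractf sum.distrib algebra_simps)
    then show ?thesis using s1 by (simp add: mean_def)
  qed
  also have "1 + h^2 * (real K)^2 \<le> exp (h^2 * (real K)^2)" by (rule exp_ge_add_one_self)
  finally show ?thesis by (simp add: exp_add mult_left_mono)
qed

lemma small_deviation_estimate:
  fixes Z \<theta> \<theta>0 d H g \<eta> s cm cn :: real
  assumes Z: "0 < Z" "Z \<le> 1" and t0: "0 < \<theta>0" "\<theta>0 \<le> \<theta>" "\<theta>0 \<le> 8" and d: "1 \<le> d"
    and H: "g \<le> H" "0 < g" and \<eta>: "0 \<le> \<eta>" "\<eta> \<le> g * \<theta>0 / 16" "\<eta> \<le> g / 16"
    and s: "0 < s" and cm: "0 \<le> cm" "cm \<le> (H + \<eta>) / s" and cn: "(H - \<eta>) / s \<le> cn"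
  shows "Z * exp (- (\<theta> * d)) * cm / cn \<le> exp (- (\<theta>0 * d / 2))"
proof -
  have Hpos: "0 < H - \<eta>" using H \<eta> by linarith
  have cnpos: "0 < cn" using cn Hpos s by (meson divide_pos_pos less_le_trans)
  have "cm / cn \<le> ((H + \<eta>) / s) / ((H - \<eta>) / s)"
    using cm cn cnpos Hpos s by (intro frac_le) auto
  also have "\<dots> = (H + \<eta>) / (H - \<eta>)" using s by simp
  also have "\<dots> \<le> 1 + \<theta>0 / 4"
  proof -
    have "\<eta> * (2 + \<theta>0 / 4) \<le> g * \<theta>0 / 16 * (2 + \<theta>0 / 4)" using \<eta> t0 by (intro mult_right_mono) auto
    also have "\<dots> \<le> g * \<theta>0 / 16 * 4" using t0 H by (intro mult_left_mono) auto
    also have "\<dots> = g * \<theta>0 / 4" by simp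
    also have "\<dots> \<le> H * \<theta>0 / 4" using H t0 by (intro divide_right_mono mult_right_mono) auto
    finally have "\<eta> * (2 + \<theta>0 / 4) \<le> H * \<theta>0 / 4" .
    then have "H + \<eta> \<le> (1 + \<theta>0 / 4) * (H - \<eta>)" by (simp add: algebra_simps)
    then show ?thesis using Hpos by (simp add: divide_le_eq)
  qed
  also have "\<dots> \<le> exp (\<theta>0 / 4)" by (rule exp_ge_add_one_self)
  finally have r: "cm / cn \<le> exp (\<theta>0 / 4)" .
  have "Z * exp (- (\<theta> * d)) * cm / cn = Z * exp (- (\<theta> * d)) * (cm / cn)" by simp
  also have "\<dots> \<le> 1 * exp (- (\<theta>0 * d)) * exp (\<theta>0 / 4)"
  proof (intro mult_mono)
    show "Z \<le> 1" by (rule Z(2))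
    show "exp (- (\<theta> * d)) \<le> exp (- (\<theta>0 * d))" using t0 d by (simp add: mult_right_mono)
    show "cm / cn \<le> exp (\<theta>0 / 4)" by (rule r)
  qed (use Z cm cnpos in auto)
  also have "\<dots> = exp (- (\<theta>0 * d) + \<theta>0 / 4)" by (simp only: exp_add mult_1_left)
  also have "\<dots> \<le> exp (- (\<theta>0 * d / 2))"
  proof -
    have "\<theta>0 * (1/2) \<le> \<theta>0 * d" using t0 d by (intro mult_left_mono) auto
    then show ?thesis by simp
  qed
  finally show ?thesis .
qed

lemma large_deviation_estimate:
  fixes Z S h \<theta> \<mu> d m n a b K g cn C c0 \<zeta> :: real
  assumes Z: "0 < Z" "Z \<le> 1" and S: "0 < S" "S \<le> exp (h * \<mu> + h^2 * K^2)"
    and hdef: "h = d / (2 * m * K^2)" and K: "0 < K" and m: "0 < m" and d: "0 \<le> d" "d = b - a"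
    and mu: "m * \<mu> \<le> 1 - b" and th: "0 \<le> \<theta>" and n: "0 < n" "n \<le> m"
    and cn: "g / (2 * sqrt n) \<le> cn" and g: "0 < g"
    and dz: "\<zeta> * m \<le> d" and \<zeta>: "0 < \<zeta>" and hle: "h \<le> 1"
    and Cdef: "C = 2 * exp 1 / g" and c0def: "c0 = \<zeta>^2 / (8 * K^2)" and Cm: "C * sqrt m \<le> exp (c0 * m)"
  shows "Z * exp (- (\<theta> * d)) * (S powr m * exp (h * a)) / cn \<le> exp (- (\<zeta> * d / (8 * K^2)))"
proof -
  have cnpos: "0 < cn" using cn g n by (meson divide_pos_pos less_le_trans mult_pos_pos real_sqrt_gt_zero zero_less_numeral)
  have h0: "0 \<le> h" using hdef d m K by simp
  have "S powr m \<le> exp (h * \<mu> + h^2 * K^2) powr m" using S m by (intro powr_mono2) auto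
  also have "\<dots> = exp (m * (h * \<mu> + h^2 * K^2))" by (simp add: powr_def)
  finally have Sm: "S powr m \<le> exp (m * (h * \<mu> + h^2 * K^2))" .
  have "m * (h * \<mu> + h^2 * K^2) + h * a = h * (m * \<mu>) + m * h^2 * K^2 + h * a" by (simp add: algebra_simps)
  also have "\<dots> \<le> h * (1 - b) + m * h^2 * K^2 + h * a" using mu h0 by (simp add: mult_left_mono)
  also have "\<dots> = h - h * d + m * h^2 * K^2" unfolding d(2) by (simp add: algebra_simps)
  also have "\<dots> = h - d^2 / (4 * m * K^2)"
  proof -
    have "h * d = d^2 / (2 * m * K^2)" "m * h^2 * K^2 = d^2 / (4 * m * K^2)"
      unfolding hdef using m K by (simp_all add: field_simps power2_eq_square)
    then show ?thesis by simp
  qed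
  also have "\<dots> \<le> 1 - \<zeta> * d / (4 * K^2)"
  proof -
    have "\<zeta> * m * d \<le> d * d" using dz d by (intro mult_right_mono) auto
    then have "\<zeta> * d / (4 * K^2) \<le> d^2 / (4 * m * K^2)" using m K by (simp add: field_simps power2_eq_square)
    then show ?thesis using hle by linarith
  qed
  finally have ex: "m * (h * \<mu> + h^2 * K^2) + h * a \<le> 1 - \<zeta> * d / (4 * K^2)" .
  have "Z * exp (- (\<theta> * d)) * (S powr m * exp (h * a)) \<le> 1 * 1 * (exp (m * (h * \<mu> + h^2 * K^2)) * exp (h * a))"
    using Z th d Sm by (intro mult_mono) (auto simp: mult_nonneg_nonneg)
  also have "\<dots> = exp (m * (h * \<mu> + h^2 * K^2) + h * a)" by (simp add: exp_add)
  also have "\<dots> \<le> exp (1 - \<zeta> * d / (4 * K^2))" using ex by simp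
  finally have num: "Z * exp (- (\<theta> * d)) * (S powr m * exp (h * a)) \<le> exp (1 - \<zeta> * d / (4 * K^2))" .
  have "Z * exp (- (\<theta> * d)) * (S powr m * exp (h * a)) / cn \<le> exp (1 - \<zeta> * d / (4 * K^2)) / (g / (2 * sqrt n))"
    using num cn cnpos g n by (intro frac_le) auto
  also have "\<dots> = (C * sqrt n) * exp (- (\<zeta> * d / (4 * K^2)))"
    using Cdef g n by (simp add: exp_diff field_simps exp_minus)
  also have "\<dots> \<le> (C * sqrt m) * exp (- (\<zeta> * d / (4 * K^2)))"
    using n Cdef g by (intro mult_right_mono mult_left_mono) auto
  also have "\<dots> \<le> exp (c0 * m) * exp (- (\<zeta> * d / (4 * K^2)))" using Cm by (intro mult_right_mono) auto
  also have "\<dots> \<le> exp (\<zeta> * d / (8 * K^2)) * exp (- (\<zeta> * d / (4 * K^2)))"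
  proof -
    have "\<zeta> * (\<zeta> * m) \<le> \<zeta> * d" using dz \<zeta> by (intro mult_left_mono) auto
    then have "c0 * m \<le> \<zeta> * d / (8 * K^2)" unfolding c0def using K by (simp add: field_simps power2_eq_square)
    then show ?thesis by (intro mult_right_mono) auto
  qed
  also have "\<dots> = exp (- (\<zeta> * d / (8 * K^2)))" by (simp add: exp_add[symmetric] field_simps)
  finally show ?thesis .
qed

context
  fixes K :: nat and p :: "int \<Rightarrow> real"
  assumes K: "1 \<le> K" and nn: "\<And>k. k \<in> step_range K \<Longrightarrow> 0 \<le> p k" and s1: "(\<Sum>k\<in>step_range K. p k) = 1"
begin

lemma mgf_lower: "exp (- (\<bar>\<theta>\<bar> * real K)) \<le> mgf K p \<theta>"
proof -
  have "(\<Sum>k\<in>step_range K. p k * exp (- (\<bar>\<theta>\<bar> * real K))) \<le> mgf K p \<theta>"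
    unfolding mgf_def
  proof (intro sum_mono mult_left_mono)
    fix k assume k: "k \<in> step_range K"
    show "0 \<le> p k" using nn k .
    have "\<bar>\<theta> * of_int k\<bar> \<le> \<bar>\<theta>\<bar> * real K" unfolding abs_mult
      using abs_step_range_le[OF k K] by (intro mult_left_mono) auto
    then show "exp (- (\<bar>\<theta>\<bar> * real K)) \<le> exp (\<theta> * of_int k)" by simp
  qed
  then show ?thesis using s1 by (simp add: sum_distrib_right[symmetric])
qed

lemma mgf_pos: "0 < mgf K p \<theta>"
  using mgf_lower[of \<theta>] by (meson exp_gt_zero less_le_trans)

lemma mgf_upper: "mgf K p \<theta> \<le> exp (\<bar>\<theta>\<bar> * real K)"
proof -
  have "mgf K p \<theta> \<le> (\<Sum>k\<in>step_range K. p k * exp (\<bar>\<theta>\<bar> * real K))"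
    unfolding mgf_def
  proof (intro sum_mono mult_left_mono)
    fix k assume k: "k \<in> step_range K"
    show "0 \<le> p k" using nn k .
    have "\<bar>\<theta> * of_int k\<bar> \<le> \<bar>\<theta>\<bar> * real K" unfolding abs_mult
      using abs_step_range_le[OF k K] by (intro mult_left_mono) auto
    then show "exp (\<theta> * of_int k) \<le> exp (\<bar>\<theta>\<bar> * real K)" by simp
  qed
  then show ?thesis using s1 by (simp add: sum_distrib_right[symmetric])
qed

lemma tilted_nonneg: "k \<in> step_range K \<Longrightarrow> 0 \<le> tilted K p \<theta> k"
  unfolding tilted_def using nn mgf_pos[of \<theta>] by simp

lemma sum_tilted: "(\<Sum>k\<in>step_range K. tilted K p \<theta> k) = 1"
  unfolding tilted_def using mgf_pos[of \<theta>] by (simp add: sum_divide_distrib[symmetric] mgf_def)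

lemma conv_pow_eq_tilted:
  "conv_pow K p n y = mgf K p \<theta> ^ n * exp (- (\<theta> * of_int y)) * conv_pow K (tilted K p \<theta>) n y"
proof (induction n arbitrary: y)
  case 0
  then show ?case by simp
next
  case (Suc n)
  have Z: "mgf K p \<theta> \<noteq> 0" using mgf_pos[of \<theta>] by simp
  have e: "exp (- (\<theta> * of_int (y - k))) = exp (- (\<theta> * of_int y)) * exp (\<theta> * of_int k)" for k
    by (simp add: exp_add[symmetric] algebra_simps)
  have "conv_pow K p (Suc n) y
      = (\<Sum>k\<in>step_range K. p k * (mgf K p \<theta> ^ n * exp (- (\<theta> * of_int (y - k))) * conv_pow K (tilted K p \<theta>) n (y - k)))"
    by (simp add: Suc.IH)
  also have "\<dots> = mgf K p \<theta> ^ Suc n * exp (- (\<theta> * of_int y))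
      * (\<Sum>k\<in>step_range K. tilted K p \<theta> k * conv_pow K (tilted K p \<theta>) n (y - k))"
    unfolding sum_distrib_left tilted_def e using Z by (intro sum.cong refl) (simp add: field_simps)
  finally show ?case by simp
qed

lemma conv_pow_le_mgf: "conv_pow K p n y \<le> mgf K p \<theta> ^ n * exp (- (\<theta> * of_int y))"
proof -
  have "conv_pow K (tilted K p \<theta>) n y \<le> 1" by (rule conv_pow_le_1[OF tilted_nonneg sum_tilted])
  then show ?thesis using mgf_pos[of \<theta>] by (subst conv_pow_eq_tilted[of _ _ \<theta>]) (simp add: mult_left_le)
qed

lemma conv_pow_ratio_eq_tilted:
  "conv_pow K p (Suc n) (- a) / conv_pow K p n (- b)
     = mgf K p \<theta> * exp (- (\<theta> * of_int (b - a)))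
       * conv_pow K (tilted K p \<theta>) (Suc n) (- a) / conv_pow K (tilted K p \<theta>) n (- b)"
proof -
  have Z: "mgf K p \<theta> \<noteq> 0" using mgf_pos[of \<theta>] by simp
  have e: "exp (\<theta> * of_int a) = exp (- (\<theta> * of_int (b - a))) * exp (\<theta> * of_int b)"
    by (simp add: exp_add[symmetric] algebra_simps)
  show ?thesis
    by (subst (1 2) conv_pow_eq_tilted[of _ _ \<theta>]) (use Z in \<open>simp add: e field_simps\<close>)
qed

lemma mgf_le_exp_tilted_mean: "mgf K p \<theta> \<le> exp (\<theta> * mean K (tilted K p \<theta>))"
proof -
  let ?w = "tilted K p \<theta>"
  let ?\<mu> = "mean K ?w"
  have Zp: "0 < mgf K p \<theta>" by (rule mgf_pos)
  have wn: "\<And>k. k \<in> step_range K \<Longrightarrow> 0 \<le> ?w k" by (rule tilted_nonneg)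
  have ws: "(\<Sum>k\<in>step_range K. ?w k) = 1" by (rule sum_tilted)
  have "(\<Sum>k\<in>step_range K. ?w k * exp (- (\<theta> * of_int k))) = 1 / mgf K p \<theta>"
  proof -
    have "(\<Sum>k\<in>step_range K. ?w k * exp (- (\<theta> * of_int k))) = (\<Sum>k\<in>step_range K. p k / mgf K p \<theta>)"
      unfolding tilted_def by (intro sum.cong refl) (simp add: exp_minus field_simps)
    then show ?thesis using s1 by (simp add: sum_divide_distrib[symmetric])
  qed
  moreover have "exp (- (\<theta> * ?\<mu>)) \<le> (\<Sum>k\<in>step_range K. ?w k * exp (- (\<theta> * of_int k)))"
  proof -
    have "(\<Sum>k\<in>step_range K. ?w k * (exp (- (\<theta> * ?\<mu>)) * (1 - \<theta> * (of_int k - ?\<mu>)))) \<le> (\<Sum>k\<in>step_range K. ?w k * exp (- (\<theta> * of_int k)))"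
    proof (intro sum_mono mult_left_mono)
      fix k assume k: "k \<in> step_range K"
      show "0 \<le> ?w k" by (rule wn[OF k])
      have "1 - \<theta> * (of_int k - ?\<mu>) \<le> exp (- (\<theta> * (of_int k - ?\<mu>)))" by (rule exp_minus_ge)
      then have "exp (- (\<theta> * ?\<mu>)) * (1 - \<theta> * (of_int k - ?\<mu>)) \<le> exp (- (\<theta> * ?\<mu>)) * exp (- (\<theta> * (of_int k - ?\<mu>)))"
        by (intro mult_left_mono) auto
      also have "\<dots> = exp (- (\<theta> * of_int k))" by (simp add: exp_add[symmetric] algebra_simps)
      finally show "exp (- (\<theta> * ?\<mu>)) * (1 - \<theta> * (of_int k - ?\<mu>)) \<le> exp (- (\<theta> * of_int k))" .
    qed
    moreover have "(\<Sum>k\<in>step_range K. ?w k * (exp (- (\<theta> * ?\<mu>)) * (1 - \<theta> * (of_int k - ?\<mu>)))) = exp (- (\<theta> * ?\<mu>))"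
    proof -
      define E where "E = exp (- (\<theta> * ?\<mu>))"
      have "(\<Sum>k\<in>step_range K. ?w k * (E * (1 - \<theta> * (of_int k - ?\<mu>))))
          = (\<Sum>k\<in>step_range K. E * ?w k - \<theta> * E * (of_int k * ?w k) + \<theta> * E * ?\<mu> * ?w k)"
        by (intro sum.cong refl) (simp add: algebra_simps)
      also have "\<dots> = E * (\<Sum>k\<in>step_range K. ?w k) - \<theta> * E * (\<Sum>k\<in>step_range K. of_int k * ?w k) + \<theta> * E * ?\<mu> * (\<Sum>k\<in>step_range K. ?w k)"
        by (simp add: sum.distrib sum_subtractf sum_distrib_left)
      also have "\<dots> = E" using ws by (simp add: mean_def)
      finally show ?thesis unfolding E_def .
    qed
    ultimately show ?thesis by simp
  qed
  ultimately have "exp (- (\<theta> * ?\<mu>)) \<le> 1 / mgf K p \<theta>" by simp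
  then have "exp (- (\<theta> * ?\<mu>)) * mgf K p \<theta> \<le> 1" using Zp by (simp add: field_simps)
  then have "mgf K p \<theta> \<le> 1 / exp (- (\<theta> * ?\<mu>))" by (simp add: field_simps)
  then show ?thesis by (simp add: exp_minus field_simps)
qed

lemma mgf_shift: "mgf K p (\<theta> + h) = mgf K p \<theta> * mgf K (tilted K p \<theta>) h"
proof -
  have "mgf K p \<theta> * mgf K (tilted K p \<theta>) h = (\<Sum>k\<in>step_range K. p k * exp ((\<theta> + h) * of_int k))"
    unfolding mgf_def[of K "tilted K p \<theta>"] sum_distrib_left tilted_def
    using mgf_pos[of \<theta>] by (intro sum.cong refl) (simp add: exp_add distrib_right)
  then show ?thesis by (simp add: mgf_def)
qed

lemma tilted_mean_increment_le:
  assumes th: "0 \<le> \<theta>"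
  shows "mean K (tilted K p \<theta>) - mean K p \<le> \<theta> * (real K)^2 * exp (\<theta> * (real K + 1))"
proof -
  let ?\<mu> = "mean K p"
  have Zp: "0 < mgf K p \<theta>" by (rule mgf_pos)
  have Zl: "exp (- \<theta>) \<le> mgf K p \<theta>"
  proof -
    have "(\<Sum>k\<in>step_range K. p k * exp (- \<theta>)) \<le> mgf K p \<theta>"
      unfolding mgf_def
    proof (intro sum_mono mult_left_mono)
      fix k assume k: "k \<in> step_range K"
      show "0 \<le> p k" by (rule nn[OF k])
      have "-1 \<le> real_of_int k" using k by (auto simp: step_range_def)
      then have "\<theta> * (-1) \<le> \<theta> * of_int k" by (rule mult_left_mono[OF _ th])
      then show "exp (- \<theta>) \<le> exp (\<theta> * of_int k)" by simp
    qed
    then show ?thesis using s1 by (simp add: sum_distrib_right[symmetric])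
  qed
  have ws: "(\<Sum>k\<in>step_range K. tilted K p \<theta> k) = 1" by (rule sum_tilted)
  have m0: "(\<Sum>k\<in>step_range K. (of_int k - ?\<mu>) * p k) = 0"
    using s1 by (simp add: left_diff_distrib sum_subtractf mean_def sum_distrib_left[symmetric])
  have "mean K (tilted K p \<theta>) - ?\<mu> = (\<Sum>k\<in>step_range K. (of_int k - ?\<mu>) * tilted K p \<theta> k)"
    using ws by (simp add: left_diff_distrib sum_subtractf mean_def sum_distrib_left[symmetric])
  also have "\<dots> = (\<Sum>k\<in>step_range K. (of_int k - ?\<mu>) * p k * (exp (\<theta> * of_int k) - 1)) / mgf K p \<theta>"
  proof -
    have "(\<Sum>k\<in>step_range K. (of_int k - ?\<mu>) * p k * (exp (\<theta> * of_int k) - 1))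
        = (\<Sum>k\<in>step_range K. (of_int k - ?\<mu>) * p k * exp (\<theta> * of_int k)) - (\<Sum>k\<in>step_range K. (of_int k - ?\<mu>) * p k)"
      by (simp add: right_diff_distrib sum_subtractf)
    also have "\<dots> = (\<Sum>k\<in>step_range K. (of_int k - ?\<mu>) * p k * exp (\<theta> * of_int k))" using m0 by simp
    finally show ?thesis unfolding tilted_def using Zp by (simp add: sum_divide_distrib mult.assoc)
  qed
  also have "\<dots> \<le> (\<Sum>k\<in>step_range K. p k * ((real K)^2 * \<theta> * exp (\<theta> * real K))) / mgf K p \<theta>"
  proof (intro divide_right_mono sum_mono)
    fix k assume k: "k \<in> step_range K"
    have kK: "\<bar>of_int k\<bar> \<le> real K" by (rule abs_step_range_le[OF k K])
    have d: "\<bar>of_int k - ?\<mu>\<bar> \<le> real K" by (rule abs_dev_mean_le[OF nn s1 k])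
    have e: "\<bar>exp (\<theta> * of_int k) - 1\<bar> \<le> \<theta> * real K * exp (\<theta> * real K)"
    proof -
      have ab: "\<bar>\<theta> * of_int k\<bar> \<le> \<theta> * real K" using th kK by (simp add: abs_mult mult_left_mono)
      have "\<bar>exp (\<theta> * of_int k) - 1\<bar> \<le> \<bar>\<theta> * of_int k\<bar> * exp \<bar>\<theta> * of_int k\<bar>"
        by (rule abs_exp_minus_one_le)
      also have "\<dots> \<le> (\<theta> * real K) * exp (\<theta> * real K)"
        using ab by (intro mult_mono) auto
      finally show ?thesis .
    qed
    have "(of_int k - ?\<mu>) * p k * (exp (\<theta> * of_int k) - 1) \<le> \<bar>(of_int k - ?\<mu>) * p k * (exp (\<theta> * of_int k) - 1)\<bar>" by simp
    also have "\<dots> = p k * (\<bar>of_int k - ?\<mu>\<bar> * \<bar>exp (\<theta> * of_int k) - 1\<bar>)" using nn[OF k] by (simp add: abs_mult)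
    also have "\<dots> \<le> p k * (real K * (\<theta> * real K * exp (\<theta> * real K)))"
      using nn[OF k] d e by (intro mult_left_mono mult_mono) auto
    also have "\<dots> = p k * ((real K)^2 * \<theta> * exp (\<theta> * real K))" by (simp add: power2_eq_square)
    finally show "(of_int k - ?\<mu>) * p k * (exp (\<theta> * of_int k) - 1) \<le> p k * ((real K)^2 * \<theta> * exp (\<theta> * real K))" .
  next
    show "0 \<le> mgf K p \<theta>" using Zp by simp
  qed
  also have "\<dots> = (real K)^2 * \<theta> * exp (\<theta> * real K) / mgf K p \<theta>"
    using s1 by (simp add: sum_distrib_right[symmetric])
  also have "\<dots> \<le> (real K)^2 * \<theta> * exp (\<theta> * real K) / exp (- \<theta>)"
    using Zl th Zp by (intro divide_left_mono) auto
  also have "\<dots> = \<theta> * (real K)^2 * exp (\<theta> * (real K + 1))"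
  proof -
    have "exp (\<theta> * (real K + 1)) = exp (\<theta> * real K) * exp \<theta>" by (simp add: exp_add[symmetric] algebra_simps)
    then show ?thesis by (simp add: exp_minus divide_inverse)
  qed
  finally show ?thesis .
qed

lemma continuous_on_tilted_mean: "continuous_on S (\<lambda>\<theta>. mean K (tilted K p \<theta>))"
proof -
  have "\<And>\<theta>. mgf K p \<theta> \<noteq> 0" using mgf_pos by (metis less_irrefl)
  then show ?thesis unfolding mean_def tilted_def mgf_def by (intro continuous_intros) (auto simp: mgf_def)
qed

lemma tilted_zero: "tilted K p 0 = p"
  by (rule ext) (simp add: tilted_def mgf_def s1)

lemma tilted_aperiodic:
  assumes b1: "\<beta> \<le> p (-1)" and b0: "\<beta> \<le> p 0" and b: "0 < \<beta>" and th: "0 \<le> \<theta>" "\<theta> \<le> T"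
  shows "aperiodic_weights K (\<beta> * exp (- (T * (real K + 1)))) (tilted K p \<theta>)"
proof -
  have "exp (\<bar>\<theta>\<bar> * real K) \<le> exp (T * real K)" using th by (intro exp_mono mult_right_mono) auto
  then have Zu: "mgf K p \<theta> \<le> exp (T * real K)" using mgf_upper[of \<theta>] by linarith
  have "\<beta> * exp (- (T * (real K + 1))) \<le> tilted K p \<theta> k" if "\<beta> \<le> p k" "-1 \<le> k" for k
  proof -
    have "\<theta> * (-1) \<le> \<theta> * of_int k" using that th by (intro mult_left_mono) auto
    then have "exp (- T) \<le> exp (\<theta> * of_int k)" using th by simp
    then have "\<beta> * exp (- T) \<le> p k * exp (\<theta> * of_int k)" using that b by (intro mult_mono) auto
    moreover have "0 \<le> p k * exp (\<theta> * of_int k)" using that b by simp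
    ultimately have "\<beta> * exp (- T) / exp (T * real K) \<le> p k * exp (\<theta> * of_int k) / mgf K p \<theta>"
      using Zu mgf_pos[of \<theta>] by (intro frac_le) auto
    moreover have "exp (- (T * (real K + 1))) = exp (- T) / exp (T * real K)"
      by (simp add: exp_diff[symmetric] algebra_simps)
    ultimately show ?thesis by (simp add: tilted_def)
  qed
  then show ?thesis unfolding aperiodic_weights_def using tilted_nonneg sum_tilted b1 b0 by auto
qed

lemma tilted_mean_nonneg:
  assumes b: "0 < \<beta>" "\<beta> \<le> 1" and j: "j \<in> step_range K" "1 \<le> j" "\<beta> \<le> p j"
  shows "0 \<le> mean K (tilted K p (ln (1 / \<beta>)))"
proof -
  define T where "T = ln (1 / \<beta>)"
  have T0: "0 \<le> T" unfolding T_def using b by simp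
  have eT: "exp T = 1 / \<beta>" unfolding T_def using b by simp
  have emT: "exp (- T) = \<beta>" using eT b by (simp add: exp_minus)
  let ?f = "\<lambda>k. of_int k * p k * exp (T * of_int k)"
  let ?R = "step_range K - {-1, j}"
  have U: "step_range K = insert (-1) (insert j ?R)" using K j by (auto simp: step_range_def)
  have jn: "j \<noteq> -1" using j by simp
  have fR: "finite ?R" by simp
  have n1: "-1 \<notin> insert j ?R" using jn by auto
  have n2: "j \<notin> ?R" by auto
  have "(\<Sum>k\<in>step_range K. ?f k) = ?f (-1) + (?f j + (\<Sum>k\<in>?R. ?f k))"
    by (subst U, subst sum.insert[OF _ n1], simp add: fR, subst sum.insert[OF fR n2], rule refl)
  then have "(\<Sum>k\<in>step_range K. ?f k) = ?f (-1) + ?f j + (\<Sum>k\<in>?R. ?f k)" by (simp only: add.assoc)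
  moreover have "0 \<le> (\<Sum>k\<in>?R. ?f k)"
  proof (intro sum_nonneg)
    fix k assume k: "k \<in> ?R"
    then have "0 \<le> k" "k \<in> step_range K" by (auto simp: step_range_def)
    then show "0 \<le> ?f k" using nn by simp
  qed
  moreover have "- \<beta> \<le> ?f (-1)"
  proof -
    have "(\<Sum>k\<in>{-1}. p k) \<le> (\<Sum>k\<in>step_range K. p k)" using K nn by (intro sum_mono2) (auto simp: step_range_def)
    then have "p (-1) \<le> 1" using s1 by simp
    moreover have "0 \<le> p (-1)" using nn K by (simp add: step_range_def)
    ultimately have "p (-1) * exp (- T) \<le> 1 * exp (- T)" by (intro mult_right_mono) auto
    then show ?thesis using emT by simp
  qed
  moreover have "1 \<le> ?f j"
  proof -
    have "T * 1 \<le> T * of_int j" using j T0 by (intro mult_left_mono) auto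
    then have "exp T \<le> exp (T * of_int j)" by simp
    have "1 = \<beta> * exp T" using eT b by simp
    also have "\<dots> \<le> p j * exp (T * of_int j)" using j b \<open>exp T \<le> exp (T * of_int j)\<close> by (intro mult_mono) auto
    also have "\<dots> \<le> of_int j * (p j * exp (T * of_int j))"
    proof -
      have "0 \<le> p j * exp (T * of_int j)" using nn j by simp
      moreover have "(1::real) \<le> of_int j" using j by simp
      ultimately have "1 * (p j * exp (T * of_int j)) \<le> of_int j * (p j * exp (T * of_int j))"
        by (intro mult_right_mono) auto
      then show ?thesis by simp
    qed
    finally show ?thesis by (simp add: mult.assoc)
  qed
  ultimately have "0 \<le> (\<Sum>k\<in>step_range K. ?f k)" using b by linarith
  then have "0 \<le> (\<Sum>k\<in>step_range K. ?f k) / mgf K p T" using mgf_pos[of T] by simp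
  also have "(\<Sum>k\<in>step_range K. ?f k) / mgf K p T = mean K (tilted K p T)"
    unfolding mean_def tilted_def by (simp add: sum_divide_distrib mult.assoc)
  finally show ?thesis unfolding T_def .
qed

(* If n * mean p <= -b, the intermediate value theorem centres the tilted walk exactly at -b;
   otherwise theta = 0 already gives n * mean p - 1 <= -b < n * mean p. *)
lemma exists_centring_tilt:
  assumes n: "1 \<le> n" and b: "1 \<le> b" and bd: "real_of_int b \<le> \<delta> * (real n + 1)" and md: "mean K p \<le> - \<delta>"
    and T0: "0 \<le> T" and mT: "0 \<le> mean K (tilted K p T)" and \<delta>: "\<delta> \<le> 1"
  shows "\<exists>\<theta>. 0 \<le> \<theta> \<and> \<theta> \<le> T \<and> -1 \<le> - of_int b - real n * mean K (tilted K p \<theta>) \<and>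
           - of_int b - real n * mean K (tilted K p \<theta>) \<le> 0 \<and>
           (- of_int b - real n * mean K (tilted K p \<theta>) = 0 \<or> (\<theta> = 0 \<and> - of_int b < real n * mean K p))"
proof (cases "real n * mean K p \<le> - of_int b")
  case True
  have "mean K (tilted K p 0) \<le> - of_int b / real n" using True n by (simp add: tilted_zero field_simps)
  moreover have "- of_int b / real n \<le> mean K (tilted K p T)"
  proof -
    have "0 \<le> real_of_int b / real n" using b by simp
    then show ?thesis using mT by simp
  qed
  ultimately obtain \<theta> where th: "0 \<le> \<theta>" "\<theta> \<le> T" "mean K (tilted K p \<theta>) = - of_int b / real n"
    using IVT'[of "\<lambda>\<theta>. mean K (tilted K p \<theta>)" 0 "- of_int b / real n" T] T0 continuous_on_tilted_mean by blast
  then have "- of_int b - real n * mean K (tilted K p \<theta>) = 0" using n by simp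
  then show ?thesis using th by auto
next
  case False
  have "- of_int b - real n * mean K p \<ge> -1"
  proof -
    have "real n * mean K p \<le> real n * (- \<delta>)" using md by (intro mult_left_mono) auto
    then show ?thesis using bd \<delta> by (simp add: algebra_simps)
  qed
  then show ?thesis using False by (intro exI[of _ 0]) (auto simp: tilted_zero T0)
qed

lemma mgf_le_1:
  assumes "0 \<le> \<theta>" "mean K (tilted K p \<theta>) \<le> 0"
  shows "mgf K p \<theta> \<le> 1"
proof -
  have "\<theta> * mean K (tilted K p \<theta>) \<le> 0" using assms by (simp add: mult_nonneg_nonpos)
  then show ?thesis using mgf_le_exp_tilted_mean[of \<theta>] by (meson exp_le_one_iff order_trans)
qed

lemma ratio_le_small_deviation:
  assumes n: "1 \<le> n" and ab: "0 \<le> a" "a < b"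
    and \<theta>: "0 < \<theta>0" "\<theta>0 \<le> \<theta>" "\<theta>0 \<le> 8"
    and centred: "real n * mean K (tilted K p \<theta>) = - of_int b"
    and H: "g \<le> H" "0 < g" "0 \<le> \<eta>" "\<eta> \<le> g * \<theta>0 / 16" "\<eta> \<le> g / 16"
    and upper: "\<And>z. sqrt (real n) * conv_pow K (tilted K p \<theta>) n z \<le> H + \<eta>"
    and lower: "H - \<eta> \<le> sqrt (real n) * conv_pow K (tilted K p \<theta>) n (- b)"
  shows "conv_pow K p (Suc n) (- a) / conv_pow K p n (- b) \<le> exp (- (\<theta>0 * of_int (b - a) / 2))"
proof -
  let ?w = "tilted K p \<theta>"
  have sn: "0 < sqrt (real n)" using n by simp
  have "real n * mean K ?w \<le> 0" using centred ab by simp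
  then have "mean K ?w \<le> 0" using n by (simp add: mult_le_0_iff)
  then have Z1: "mgf K p \<theta> \<le> 1" using \<theta> by (intro mgf_le_1) auto
  have up: "conv_pow K ?w n z \<le> (H + \<eta>) / sqrt (real n)" for z
    using upper[of z] sn by (simp add: pos_le_divide_eq mult.commute)
  have num: "conv_pow K ?w (Suc n) (- a) \<le> (H + \<eta>) / sqrt (real n)"
    by (rule conv_pow_Suc_le[OF tilted_nonneg sum_tilted up])
  have den: "(H - \<eta>) / sqrt (real n) \<le> conv_pow K ?w n (- b)"
    using lower sn by (simp add: field_simps)
  have d: "1 \<le> real_of_int (b - a)" using ab by simp
  show ?thesis
    unfolding conv_pow_ratio_eq_tilted[where \<theta> = \<theta>]
    by (rule small_deviation_estimate[OF mgf_pos Z1 \<theta> d H sn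
          conv_pow_nonneg[OF tilted_nonneg] num den])
qed

lemma ratio_le_large_deviation:
  assumes n: "1 \<le> n" and ab: "0 \<le> a" "a < b" "of_int b \<le> real (Suc n)" and \<theta>: "0 \<le> \<theta>"
    and centred: "- 1 \<le> - of_int b - real n * mean K (tilted K p \<theta>)"
    and H: "g \<le> H" "0 < g" "\<eta> \<le> g / 16"
    and lower: "H - \<eta> \<le> sqrt (real n) * conv_pow K (tilted K p \<theta>) n (- b)"
    and \<zeta>: "0 < \<zeta>" "\<zeta> * real (Suc n) \<le> of_int (b - a)"
    and growth: "2 * exp 1 / g * sqrt (real (Suc n)) \<le> exp (\<zeta>^2 / (8 * (real K)^2) * real (Suc n))"
  shows "conv_pow K p (Suc n) (- a) / conv_pow K p n (- b) \<le> exp (- (\<zeta> * of_int (b - a) / (8 * (real K)^2)))"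
proof -
  let ?w = "tilted K p \<theta>" and ?\<mu> = "mean K (tilted K p \<theta>)"
  define m where "m = real (Suc n)"
  define d where "d = real_of_int (b - a)"
  define h where "h = d / (2 * m * (real K)^2)"
  have Kpos: "0 < real K" using K by simp
  have mpos: "0 < m" unfolding m_def by simp
  have d0: "0 \<le> d" "d \<le> m" unfolding d_def m_def using ab by auto
  have h0: "0 \<le> h" unfolding h_def using d0 by simp
  have hK: "\<bar>h\<bar> * real K \<le> 1"
  proof -
    have "h * real K = d / (2 * m * real K)"
      unfolding h_def using Kpos by (simp add: power2_eq_square)
    also have "\<dots> \<le> m / (2 * m * 1)" using d0 mpos K by (intro frac_le) auto
    also have "\<dots> \<le> 1" using mpos by simp
    finally show ?thesis using h0 by simp
  qed
  then have h1: "h \<le> 1" using h0 K by (smt (verit) mult_le_cancel_left1 of_nat_1 of_nat_mono)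
  have "real n * ?\<mu> \<le> 0" using centred ab by simp
  then have \<mu>0: "?\<mu> \<le> 0" using n by (simp add: mult_le_0_iff)
  have m\<mu>: "m * ?\<mu> \<le> 1 - of_int b" using centred \<mu>0 unfolding m_def by (simp add: algebra_simps)
  have Z: "0 < mgf K p \<theta>" "mgf K p \<theta> \<le> 1" using \<theta> \<mu>0 by (auto intro: mgf_pos mgf_le_1)
  have S: "0 < mgf K ?w h"
    using mgf_shift[of \<theta> h] mgf_pos[of "\<theta> + h"] Z by (simp add: zero_less_mult_iff)
  have Sb: "mgf K ?w h \<le> exp (h * ?\<mu> + h^2 * (real K)^2)"
    by (rule mgf_le_exp_mean[OF tilted_nonneg sum_tilted hK])
  have sn: "0 < sqrt (real n)" using n by simp
  have cn: "g / (2 * sqrt (real n)) \<le> conv_pow K ?w n (- b)"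
    using lower H sn by (simp add: field_simps)
  then have cnpos: "0 < conv_pow K ?w n (- b)" using H sn by (smt (verit) divide_pos_pos)
  have "conv_pow K p (Suc n) (- a) \<le> (mgf K p \<theta> * mgf K ?w h) ^ Suc n * exp ((\<theta> + h) * of_int a)"
    using conv_pow_le_mgf[of "Suc n" "- a" "\<theta> + h"] by (simp add: mgf_shift)
  then have "conv_pow K p (Suc n) (- a) / conv_pow K p n (- b)
      \<le> (mgf K p \<theta> * mgf K ?w h) ^ Suc n * exp ((\<theta> + h) * of_int a)
        / (mgf K p \<theta> ^ n * exp (\<theta> * of_int b) * conv_pow K ?w n (- b))"
    using Z cnpos by (subst (2) conv_pow_eq_tilted[where \<theta> = \<theta>]) (simp add: divide_right_mono)
  also have "\<dots> = mgf K p \<theta> * exp (- (\<theta> * d)) * (mgf K ?w h powr m * exp (h * of_int a))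
      / conv_pow K ?w n (- b)"
  proof -
    have "mgf K ?w h powr m = mgf K ?w h ^ Suc n" unfolding m_def using S by (rule powr_realpow)
    then show ?thesis using Z S cnpos
      by (simp add: power_mult_distrib field_simps) (simp add: d_def algebra_simps flip: exp_add)
  qed
  also have "\<dots> \<le> exp (- (\<zeta> * d / (8 * (real K)^2)))"
  proof (rule large_deviation_estimate[OF Z S Sb h_def Kpos mpos d0(1) _ m\<mu> \<theta> _ _ cn H(2) _ \<zeta>(1) h1 refl refl])
    show "d = of_int b - of_int a" unfolding d_def by simp
    show "0 < real n" "real n \<le> m" using n unfolding m_def by auto
    show "\<zeta> * m \<le> d" using \<zeta> unfolding m_def d_def by simp
    show "2 * exp 1 / g * sqrt m \<le> exp (\<zeta>^2 / (8 * (real K)^2) * m)" using growth unfolding m_def .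
  qed
  finally show ?thesis unfolding d_def .
qed

end

lemma exp_mult_of_int:
  fixes x :: real
  assumes "0 \<le> k"
  shows "exp (x * of_int k) = exp x ^ nat k"
  using exp_of_nat2_mult[of x "nat k"] assms by simp

lemma mult_sqrt_le_exp:
  fixes C c x :: real
  assumes c: "0 < c" and x: "(C / c)^2 \<le> x"
  shows "C * sqrt x \<le> exp (c * x)"
proof -
  have x0: "0 \<le> x" using x by (meson order_trans zero_le_power2)
  have "C / c \<le> sqrt x" using x by (intro real_le_rsqrt)
  then have "C \<le> c * sqrt x" using c by (simp add: field_simps)
  then have "C * sqrt x \<le> c * sqrt x * sqrt x" using x0 by (intro mult_right_mono) auto
  also have "\<dots> = c * x" using x0 by simp
  also have "\<dots> \<le> exp (c * x)" using exp_ge_add_one_self[of "c * x"] by linarith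
  finally show ?thesis .
qed

(* Tilting by T makes the mean nonnegative (tilted_mean_nonneg); alpha bounds the masses at -1
   and 0 after any tilt in [0, T]; theta0 is a lower bound on any tilt in [0, T] that raises the
   mean by delta / 4. *)
locale ratio_bound_constants =
  fixes K :: nat and \<beta> \<delta> :: real
  assumes K: "1 \<le> K" and \<beta>: "0 < \<beta>" "\<beta> \<le> 1" and \<delta>: "0 < \<delta>" "\<delta> \<le> 1"
begin

definition T :: real where "T = ln (1 / \<beta>)"
definition L :: real where "L = (real K)^2 * exp (T * (real K + 1))"
definition \<theta>0 :: real where "\<theta>0 = \<delta> / (4 * L)"
definition \<alpha> :: real where "\<alpha> = \<beta> * exp (- (T * (real K + 1)))"
definition g :: real where "g = 1 / (2 * pi * real K)"
definition \<eta> :: real where "\<eta> = g * min 1 \<theta>0 / 16"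
definition \<zeta> :: real where "\<zeta> = \<delta> / 8"
definition q :: real where "q = max (exp (- (\<theta>0 / 2))) (exp (- (\<zeta> / (8 * (real K)^2))))"

lemma constant_bounds:
  "0 \<le> T" "1 \<le> L" "0 < \<theta>0" "\<theta>0 \<le> 8" "0 < \<alpha>" "0 < g" "0 < \<eta>" "\<eta> \<le> g * \<theta>0 / 16" "\<eta> \<le> g / 16"
  "0 < \<zeta>" "0 < q" "q < 1"
proof -
  show T0: "0 \<le> T" unfolding T_def using \<beta> by simp
  have "1 * 1 \<le> (real K)^2 * exp (T * (real K + 1))"
    using K T0 by (intro mult_mono) (auto simp: one_le_power)
  then show L1: "1 \<le> L" unfolding L_def by simp
  show t0: "0 < \<theta>0" unfolding \<theta>0_def using \<delta> L1 by simp
  show "\<theta>0 \<le> 8" unfolding \<theta>0_def using \<delta> L1 by (simp add: field_simps)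
  show "0 < \<alpha>" unfolding \<alpha>_def using \<beta> by simp
  show g: "0 < g" unfolding g_def using K by simp
  show "0 < \<eta>" unfolding \<eta>_def using g t0 by simp
  have "g * min 1 \<theta>0 \<le> g * \<theta>0" "g * min 1 \<theta>0 \<le> g * 1" using g by (intro mult_left_mono; simp)+
  then show "\<eta> \<le> g * \<theta>0 / 16" "\<eta> \<le> g / 16" unfolding \<eta>_def by simp_all
  show \<zeta>: "0 < \<zeta>" unfolding \<zeta>_def using \<delta> by simp
  have "exp (- (\<theta>0 / 2)) < 1" "exp (- (\<zeta> / (8 * (real K)^2))) < 1" using t0 \<zeta> K by simp_all
  then show "0 < q" "q < 1" unfolding q_def by (simp_all add: less_max_iff_disj)
qed

lemma \<theta>0_le_tilt:
  assumes nn: "\<And>k. k \<in> step_range K \<Longrightarrow> 0 \<le> p k" and s1: "(\<Sum>k\<in>step_range K. p k) = 1"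
    and \<theta>: "0 \<le> \<theta>" "\<theta> \<le> T" and \<mu>: "mean K p \<le> - \<delta>" "- (3 * \<delta> / 4) \<le> mean K (tilted K p \<theta>)"
  shows "\<theta>0 \<le> \<theta>"
proof -
  have "mean K (tilted K p \<theta>) - mean K p \<le> \<theta> * (real K)^2 * exp (\<theta> * (real K + 1))"
    by (rule tilted_mean_increment_le[OF K nn s1 \<theta>(1)])
  also have "\<dots> \<le> \<theta> * L" unfolding L_def using \<theta> by (simp add: mult_left_mono mult.assoc)
  finally have "\<delta> / 4 \<le> \<theta> * L" using \<mu> by simp
  then show ?thesis unfolding \<theta>0_def using constant_bounds(2) by (simp add: field_simps)
qed

lemma small_deviation_tilt:
  assumes nn: "\<And>k. k \<in> step_range K \<Longrightarrow> 0 \<le> p k" and s1: "(\<Sum>k\<in>step_range K. p k) = 1"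
    and n: "5 \<le> n" and \<theta>: "0 \<le> \<theta>" "\<theta> \<le> T" and \<mu>: "mean K p \<le> - \<delta>"
    and centring: "- of_int b - real n * mean K (tilted K p \<theta>) = 0 \<or> (\<theta> = 0 \<and> - of_int b < real n * mean K p)"
    and b: "of_int b < 5 * \<delta> * (real n + 1) / 8"
  shows "real n * mean K (tilted K p \<theta>) = - of_int b" "\<theta>0 \<le> \<theta>"
proof -
  show exact: "real n * mean K (tilted K p \<theta>) = - of_int b"
  proof (rule ccontr)
    assume "real n * mean K (tilted K p \<theta>) \<noteq> - of_int b"
    then have "- of_int b < real n * mean K p" using centring by auto
    moreover have "real n * mean K p \<le> real n * (- \<delta>)" using \<mu> by (intro mult_left_mono) auto
    ultimately have "real n * \<delta> < 5 * \<delta> * (real n + 1) / 8" using b by linarith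
    then have "real n * 8 < 5 * (real n + 1)" using \<delta> by (simp add: field_simps)
    then show False using n by simp
  qed
  have "5 * \<delta> * (real n + 1) / 8 \<le> 3 * \<delta> / 4 * real n" using n \<delta> by (simp add: field_simps)
  then have "of_int b / real n \<le> 3 * \<delta> / 4" using b n by (simp add: pos_divide_le_eq)
  moreover have "mean K (tilted K p \<theta>) = - (of_int b / real n)" using exact n by (simp add: field_simps)
  ultimately have raised: "- (3 * \<delta> / 4) \<le> mean K (tilted K p \<theta>)" by simp
  show "\<theta>0 \<le> \<theta>" by (rule \<theta>0_le_tilt[OF nn s1 \<theta> \<mu> raised])
qed

lemma ratio_le_q_power:
  assumes lclt: "\<And>w. aperiodic_weights K \<alpha> w \<Longrightarrow>
      \<exists>H. g \<le> H \<and> (\<forall>z. sqrt (real n) * conv_pow K w n z \<le> H + \<eta>) \<and>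
        (\<forall>z. \<bar>of_int z - real n * mean K w\<bar> \<le> 1 \<longrightarrow> H - \<eta> \<le> sqrt (real n) * conv_pow K w n z)"
    and n: "5 \<le> n"
    and growth: "2 * exp 1 / g * sqrt (real (Suc n)) \<le> exp (\<zeta>^2 / (8 * (real K)^2) * real (Suc n))"
    and nn: "\<And>k. k \<in> step_range K \<Longrightarrow> 0 \<le> p k" and s1: "(\<Sum>k\<in>step_range K. p k) = 1"
    and p: "\<beta> \<le> p (-1)" "\<beta> \<le> p 0" and j: "j \<in> step_range K" "1 \<le> j" "\<beta> \<le> p j"
    and \<mu>: "mean K p \<le> - \<delta>"
    and ab: "0 \<le> a" "2 * real_of_int a < \<delta> * real (Suc n)" "real_of_int b \<le> \<delta> * real (Suc n)" "a < b"
  shows "conv_pow K p (Suc n) (- a) / conv_pow K p n (- b) \<le> q ^ nat (b - a)"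
proof -
  note c = constant_bounds
  have n1: "1 \<le> n" using n by simp
  have b: "1 \<le> b" "real_of_int b \<le> \<delta> * (real n + 1)" using ab by (auto simp: add.commute)
  have mT: "0 \<le> mean K (tilted K p T)" unfolding T_def by (rule tilted_mean_nonneg[OF K nn s1 \<beta> j])
  obtain \<theta> where \<theta>: "0 \<le> \<theta>" "\<theta> \<le> T"
    and centred: "- 1 \<le> - of_int b - real n * mean K (tilted K p \<theta>)"
      "- of_int b - real n * mean K (tilted K p \<theta>) \<le> 0"
    and exact: "- of_int b - real n * mean K (tilted K p \<theta>) = 0 \<or> (\<theta> = 0 \<and> - of_int b < real n * mean K p)"
    using exists_centring_tilt[OF K nn s1 n1 b \<mu> c(1) mT \<delta>(2)] by blast
  have "aperiodic_weights K \<alpha> (tilted K p \<theta>)"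
    unfolding \<alpha>_def by (rule tilted_aperiodic[OF K nn s1 p \<beta>(1) \<theta>])
  then obtain H where H: "g \<le> H" and upper: "\<forall>z. sqrt (real n) * conv_pow K (tilted K p \<theta>) n z \<le> H + \<eta>"
    and near: "\<forall>z. \<bar>of_int z - real n * mean K (tilted K p \<theta>)\<bar> \<le> 1 \<longrightarrow>
      H - \<eta> \<le> sqrt (real n) * conv_pow K (tilted K p \<theta>) n z"
    using lclt by blast
  have lower: "H - \<eta> \<le> sqrt (real n) * conv_pow K (tilted K p \<theta>) n (- b)"
    using near[rule_format, of "- b"] centred by simp
  show ?thesis
  proof (cases "of_int (b - a) < \<zeta> * real (Suc n)")
    case True
    have "of_int b - of_int a < \<delta> * (real n + 1) / 8" "2 * of_int a < \<delta> * (real n + 1)"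
      using True ab(2) unfolding \<zeta>_def by (simp_all add: algebra_simps)
    then have "of_int b < 5 * \<delta> * (real n + 1) / 8" by linarith
    note small = small_deviation_tilt[OF nn s1 n \<theta> \<mu> exact this]
    have "conv_pow K p (Suc n) (- a) / conv_pow K p n (- b) \<le> exp (- (\<theta>0 * of_int (b - a) / 2))"
      by (rule ratio_le_small_deviation[OF K nn s1 n1 ab(1,4) c(3) small(2) c(4) small(1) H c(6)
            less_imp_le[OF c(7)] c(8,9) upper[rule_format] lower])
    also have "\<dots> = exp (- (\<theta>0 / 2)) ^ nat (b - a)"
      using exp_mult_of_int[of "b - a" "- (\<theta>0 / 2)"] ab(4) by simp
    also have "\<dots> \<le> q ^ nat (b - a)" unfolding q_def by (intro power_mono) auto
    finally show ?thesis .
  next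
    case False
    have "\<delta> * real (Suc n) \<le> real (Suc n)" using \<delta> by (intro mult_left_le_one_le) auto
    then have b_le: "of_int b \<le> real (Suc n)" using ab(3) by linarith
    have d_ge: "\<zeta> * real (Suc n) \<le> of_int (b - a)" using False by simp
    have "conv_pow K p (Suc n) (- a) / conv_pow K p n (- b)
        \<le> exp (- (\<zeta> * of_int (b - a) / (8 * (real K)^2)))"
      by (rule ratio_le_large_deviation[OF K nn s1 n1 ab(1,4) b_le \<theta>(1) centred(1) H c(6,9) lower c(10) d_ge growth])
    also have "\<dots> = exp (- (\<zeta> / (8 * (real K)^2))) ^ nat (b - a)"
      using exp_mult_of_int[of "b - a" "- (\<zeta> / (8 * (real K)^2))"] ab(4) by simp
    also have "\<dots> \<le> q ^ nat (b - a)" unfolding q_def by (intro power_mono) auto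
    finally show ?thesis .
  qed
qed

end

theorem conv_pow_ratio_bound:
  fixes K :: nat and \<beta> \<delta> :: real
  assumes K: "1 \<le> K" and \<beta>: "0 < \<beta>" "\<beta> \<le> 1" and \<delta>: "0 < \<delta>" "\<delta> \<le> 1"
  obtains q M where "0 < q" "q < 1"
    "\<And>m p j a b. M \<le> m \<Longrightarrow> (\<And>k. k \<in> step_range K \<Longrightarrow> 0 \<le> p k) \<Longrightarrow> (\<Sum>k\<in>step_range K. p k) = 1 \<Longrightarrow>
      \<beta> \<le> p (-1) \<Longrightarrow> \<beta> \<le> p 0 \<Longrightarrow> j \<in> step_range K \<Longrightarrow> 1 \<le> j \<Longrightarrow> \<beta> \<le> p j \<Longrightarrow> mean K p \<le> - \<delta> \<Longrightarrow>
      0 \<le> a \<Longrightarrow> 2 * real_of_int a < \<delta> * real m \<Longrightarrow> real_of_int b \<le> \<delta> * real m \<Longrightarrow> a < b \<Longrightarrow>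
      conv_pow K p m (- a) / conv_pow K p (m - 1) (- b) \<le> q ^ nat (b - a)"
proof -
  interpret ratio_bound_constants K \<beta> \<delta> using assms by unfold_locales
  note c = constant_bounds
  obtain N where lclt: "\<And>n w. N \<le> n \<Longrightarrow> aperiodic_weights K \<alpha> w \<Longrightarrow>
     \<exists>H. g \<le> H \<and> (\<forall>z. sqrt (real n) * conv_pow K w n z \<le> H + \<eta>) \<and>
          (\<forall>z. \<bar>of_int z - real n * mean K w\<bar> \<le> 1 \<longrightarrow> H - \<eta> \<le> sqrt (real n) * conv_pow K w n z)"
    using uniform_local_limit[OF K c(5,7), folded g_def] by blast
  define c0 where "c0 = \<zeta>^2 / (8 * (real K)^2)"
  have "0 < c0" unfolding c0_def using c(10) K by simp
  define M0 where "M0 = nat \<lceil>(2 * exp 1 / g / c0)^2\<rceil>"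
  have growth: "2 * exp 1 / g * sqrt (real m) \<le> exp (c0 * real m)" if "M0 \<le> m" for m
  proof (rule mult_sqrt_le_exp[OF \<open>0 < c0\<close>])
    have "real M0 \<le> real m" using that by simp
    then show "(2 * exp 1 / g / c0)^2 \<le> real m"
      using real_nat_ceiling_ge[of "(2 * exp 1 / g / c0)^2"] unfolding M0_def by linarith
  qed
  show thesis
  proof (rule that[of q "max (N + 1) (max 6 M0)", OF c(11,12)])
    fix m p j a b
    assume M: "max (N + 1) (max 6 M0) \<le> m"
      and hyps: "\<And>k. k \<in> step_range K \<Longrightarrow> 0 \<le> p k" "(\<Sum>k\<in>step_range K. p k) = 1"
      "\<beta> \<le> p (-1)" "\<beta> \<le> p 0" "j \<in> step_range K" "1 \<le> j" "\<beta> \<le> p j" "mean K p \<le> - \<delta>"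
      "0 \<le> a" "2 * real_of_int a < \<delta> * real m" "real_of_int b \<le> \<delta> * real m" "a < b"
    define n where "n = m - 1"
    have m: "m = Suc n" and n: "N \<le> n" "5 \<le> n" "M0 \<le> Suc n" using M unfolding n_def by auto
    have "2 * exp 1 / g * sqrt (real (Suc n)) \<le> exp (\<zeta>^2 / (8 * (real K)^2) * real (Suc n))"
      using growth[OF n(3)] unfolding c0_def .
    from ratio_le_q_power[OF lclt[OF n(1)] n(2) this hyps[unfolded m]]
    show "conv_pow K p m (- a) / conv_pow K p (m - 1) (- b) \<le> q ^ nat (b - a)"
      by (simp only: m diff_Suc_1)
  qed
qed

section \<open>The walk with steps X^(c)\<close>

definition X_weights :: "(nat \<Rightarrow> real) \<Rightarrow> nat \<Rightarrow> real \<Rightarrow> real \<Rightarrow> int \<Rightarrow> real" where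
  "X_weights \<nu> K \<epsilon> c = (\<lambda>k::int.
     if k \<in> {-1 .. int K - 1} then
       (if k = 0 then (\<nu> 1 + c) / (1 - \<epsilon> + c) else \<nu> (nat (k + 1)) / (1 - \<epsilon> + c))
     else 0)"

lemma step_range_eq_image: "step_range K = (\<lambda>i::nat. int i - 1) ` {0..K}"
proof -
  have "k \<in> (\<lambda>i::nat. int i - 1) ` {0..K}" if "k \<in> step_range K" for k
  proof
    show "k = int (nat (k + 1)) - 1" using that by (auto simp: step_range_def)
    show "nat (k + 1) \<in> {0..K}" using that by (auto simp: step_range_def)
  qed
  then show ?thesis by (auto simp: step_range_def)
qed

lemma inj_on_int_minus_1: "inj_on (\<lambda>i::nat. int i - 1) A" by (auto simp: inj_on_def)

lemma sum_step_range: "(\<Sum>k\<in>step_range K. f k) = (\<Sum>i\<in>{0..K}. f (int i - 1))"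
  unfolding step_range_eq_image by (subst sum.reindex[OF inj_on_int_minus_1]) (simp add: o_def)

lemma pmf_iid_sum:
  assumes fin: "\<And>x. x \<notin> step_range K \<Longrightarrow> pmf P x = 0"
  shows "pmf (iid_sum_pmf P m) y = conv_pow K (pmf P) m y"
proof (induction m arbitrary: y)
  case 0
  then show ?case by (simp add: pmf_return)
next
  case (Suc m)
  have inner: "pmf (bind_pmf (iid_sum_pmf P m) (\<lambda>s. return_pmf (x + s))) y = pmf (iid_sum_pmf P m) (y - x)" for x
  proof -
    have "bind_pmf (iid_sum_pmf P m) (\<lambda>s. return_pmf (x + s)) = map_pmf (\<lambda>s. x + s) (iid_sum_pmf P m)"
      by (simp add: map_pmf_def)
    moreover have "pmf (map_pmf (\<lambda>s. x + s) (iid_sum_pmf P m)) (x + (y - x)) = pmf (iid_sum_pmf P m) (y - x)"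
      by (rule pmf_map_inj') (auto simp: inj_def)
    ultimately show ?thesis by simp
  qed
  have "pmf (iid_sum_pmf P (Suc m)) y = pmf (bind_pmf P (\<lambda>x. bind_pmf (iid_sum_pmf P m) (\<lambda>s. return_pmf (x + s)))) y"
    by (simp only: iid_sum_pmf.simps)
  also have "\<dots> = (\<integral>x. pmf (bind_pmf (iid_sum_pmf P m) (\<lambda>s. return_pmf (x + s))) y \<partial>measure_pmf P)"
    by (rule pmf_bind)
  also have "\<dots> = (\<integral>x. pmf (iid_sum_pmf P m) (y - x) \<partial>measure_pmf P)"
    by (simp only: inner)
  also have "\<dots> = (\<Sum>x\<in>step_range K. pmf P x *\<^sub>R pmf (iid_sum_pmf P m) (y - x))"
    by (rule integral_measure_pmf) (use fin in \<open>auto simp: set_pmf_iff\<close>)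
  also have "\<dots> = conv_pow K (pmf P) (Suc m) y" by (simp add: Suc.IH)
  finally show ?case .
qed

context
  fixes \<nu> :: "nat \<Rightarrow> real" and K :: nat and \<epsilon> c :: real
  assumes nonneg: "\<And>i. i \<le> K \<Longrightarrow> \<nu> i \<ge> 0" and K: "1 \<le> K"
    and eps_def: "(\<Sum>i\<le>K. \<nu> i) = 1 - \<epsilon>" and D: "0 < 1 - \<epsilon>" and c: "0 \<le> c" "c \<le> \<epsilon>"
begin

private lemma Dpos: "0 < 1 - \<epsilon> + c" using D c by simp

private lemma le_div_denominator: "0 \<le> x \<Longrightarrow> x \<le> x / (1 - \<epsilon> + c)"
  using Dpos c by (simp add: le_divide_eq mult_left_le)

lemma X_weights_shift: "X_weights \<nu> K \<epsilon> c (int i - 1) = (\<nu> i + (if i = 1 then c else 0)) / (1 - \<epsilon> + c)" if "i \<le> K" for i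
  using that by (auto simp: X_weights_def)

lemma X_weights_nonneg: "0 \<le> X_weights \<nu> K \<epsilon> c k"
  unfolding X_weights_def using nonneg Dpos c by (auto intro!: divide_nonneg_pos add_nonneg_nonneg)

lemma X_weights_outside: "k \<notin> step_range K \<Longrightarrow> X_weights \<nu> K \<epsilon> c k = 0" by (auto simp: X_weights_def step_range_def)

lemma sum_X_weights: "(\<Sum>k\<in>step_range K. X_weights \<nu> K \<epsilon> c k) = 1"
proof -
  have "(\<Sum>k\<in>step_range K. X_weights \<nu> K \<epsilon> c k) = (\<Sum>i\<in>{0..K}. (\<nu> i + (if i = 1 then c else 0)) / (1 - \<epsilon> + c))"
    unfolding sum_step_range by (intro sum.cong refl) (simp add: X_weights_shift)
  also have "\<dots> = ((\<Sum>i\<in>{0..K}. \<nu> i) + c) / (1 - \<epsilon> + c)"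
    using K by (simp add: sum_divide_distrib[symmetric] sum.distrib)
  also have "(\<Sum>i\<in>{0..K}. \<nu> i) = 1 - \<epsilon>" using eps_def by (simp add: atLeast0AtMost)
  finally show ?thesis using Dpos by simp
qed

lemma pmf_X_pmf: "pmf (X_pmf \<nu> K \<epsilon> c) k = X_weights \<nu> K \<epsilon> c k"
proof -
  have nn: "\<And>x. 0 \<le> X_weights \<nu> K \<epsilon> c x" by (rule X_weights_nonneg)
  have "(\<integral>\<^sup>+x. ennreal (X_weights \<nu> K \<epsilon> c x) \<partial>count_space UNIV) = (\<Sum>x\<in>step_range K. ennreal (X_weights \<nu> K \<epsilon> c x))"
    by (rule nn_integral_count_space') (auto simp: X_weights_outside)
  also have "\<dots> = ennreal (\<Sum>x\<in>step_range K. X_weights \<nu> K \<epsilon> c x)" using nn by (simp add: sum_ennreal)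
  also have "\<dots> = 1" by (simp add: sum_X_weights)
  finally have pr: "(\<integral>\<^sup>+x. ennreal (X_weights \<nu> K \<epsilon> c x) \<partial>count_space UNIV) = 1" .
  show ?thesis unfolding X_pmf_def using pmf_embed_pmf[OF nn pr] by (simp add: X_weights_def)
qed

lemma mean_X_weights: "mean K (X_weights \<nu> K \<epsilon> c) = ((\<Sum>i=1..K. real i * \<nu> i) - (1 - \<epsilon>)) / (1 - \<epsilon> + c)"
proof -
  have "mean K (X_weights \<nu> K \<epsilon> c) = (\<Sum>i\<in>{0..K}. (real i - 1) * ((\<nu> i + (if i = 1 then c else 0)) / (1 - \<epsilon> + c)))"
    unfolding mean_def sum_step_range by (intro sum.cong refl) (simp add: X_weights_shift)
  also have "\<dots> = (\<Sum>i\<in>{0..K}. (real i * \<nu> i - \<nu> i)) / (1 - \<epsilon> + c)"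
    unfolding sum_divide_distrib by (intro sum.cong refl) (auto simp: algebra_simps)
  also have "(\<Sum>i\<in>{0..K}. (real i * \<nu> i - \<nu> i)) = (\<Sum>i\<in>{0..K}. real i * \<nu> i) - (1 - \<epsilon>)"
    using eps_def by (simp add: sum_subtractf atLeast0AtMost)
  also have "(\<Sum>i\<in>{0..K}. real i * \<nu> i) = (\<Sum>i=1..K. real i * \<nu> i)"
  proof -
    have "{0..K} = insert 0 {1..K}" by auto
    then show ?thesis by simp
  qed
  finally show ?thesis .
qed

lemma X_weights_ge: "i \<le> K \<Longrightarrow> \<nu> i \<le> X_weights \<nu> K \<epsilon> c (int i - 1)"
proof -
  assume i: "i \<le> K"
  have "\<nu> i \<le> \<nu> i + (if i = 1 then c else 0)" using c by simp
  also have "\<dots> \<le> (\<nu> i + (if i = 1 then c else 0)) / (1 - \<epsilon> + c)"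
    using i nonneg c by (intro le_div_denominator) simp
  finally show ?thesis using X_weights_shift[OF i] by simp
qed

lemma mean_X_weights_le:
  assumes delta_def: "(\<Sum>i=1..K. real i * \<nu> i) + \<epsilon> = 1 - \<delta>" and \<delta>: "0 < \<delta>"
  shows "mean K (X_weights \<nu> K \<epsilon> c) \<le> - \<delta>"
proof -
  have "(\<Sum>i=1..K. real i * \<nu> i) - (1 - \<epsilon>) = - \<delta>" using delta_def by simp
  then have "mean K (X_weights \<nu> K \<epsilon> c) = - (\<delta> / (1 - \<epsilon> + c))" by (simp add: mean_X_weights)
  also have "\<dots> \<le> - \<delta>" using \<delta> by (simp add: le_div_denominator)
  finally show ?thesis .
qed

lemma pmf_iid_sum_X_pmf:
  "pmf (iid_sum_pmf (X_pmf \<nu> K \<epsilon> c) m) y = conv_pow K (X_weights \<nu> K \<epsilon> c) m y"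
proof -
  have "pmf (X_pmf \<nu> K \<epsilon> c) = X_weights \<nu> K \<epsilon> c" by (rule ext) (rule pmf_X_pmf)
  then show ?thesis using pmf_iid_sum[of K "X_pmf \<nu> K \<epsilon> c"] X_weights_outside by simp
qed

end

lemma scaled_endpoints:
  fixes \<delta> r s :: real and m :: nat and a b :: int
  assumes m: "0 < m" and s: "0 \<le> s" and r: "s < r" "\<delta> / 2 < r" "r \<le> \<delta>"
    and a: "(\<delta> - r) * real m = of_int a" and b: "(\<delta> - s) * real m = of_int b"
  shows "0 \<le> a" "2 * of_int a < \<delta> * real m" "of_int b \<le> \<delta> * real m" "a < b"
    "(r - s) * real m = real (nat (b - a))"
proof -
  have "(\<delta> - r) * real m < \<delta> / 2 * real m" "(\<delta> - r) * real m < (\<delta> - s) * real m"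
    using m r by (intro mult_strict_right_mono; simp)+
  moreover have "(\<delta> - s) * real m \<le> \<delta> * real m" using s by (intro mult_right_mono) auto
  moreover have "0 \<le> (\<delta> - r) * real m" using r by simp
  ultimately show ab: "0 \<le> a" "2 * of_int a < \<delta> * real m" "of_int b \<le> \<delta> * real m" "a < b"
    unfolding a b by linarith+
  show "(r - s) * real m = real (nat (b - a))" using a b ab(4) by (simp add: algebra_simps)
qed

theorem mainTheorem17:
  fixes K :: nat and \<nu> :: "nat \<Rightarrow> real" and \<epsilon> \<delta> :: real
  assumes nonneg: "\<And>i. i \<le> K \<Longrightarrow> \<nu> i \<ge> 0"
    and nu0: "\<nu> 0 > 0" and nu1: "\<nu> 1 > 0"
    and nubig: "\<exists>i. 1 < i \<and> i \<le> K \<and> \<nu> i > 0"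
    and eps_def: "(\<Sum>i\<le>K. \<nu> i) = 1 - \<epsilon>" and eps_pos: "\<epsilon> > 0"
    and delta_def: "(\<Sum>i=1..K. real i * \<nu> i) + \<epsilon> = 1 - \<delta>" and delta_pos: "\<delta> > 0"
  shows "\<exists>q::real. 0 < q \<and> q < 1 \<and> (\<exists>M::nat. \<forall>m\<ge>M. \<forall>c s r. \<forall>a b :: int.
           0 \<le> c \<and> c \<le> \<epsilon> \<and> 0 \<le> s \<and> s < \<delta> \<and> max s (\<delta>/2) < r \<and> r \<le> \<delta> \<and>
           (\<delta> - r) * real m = real_of_int a \<and> (\<delta> - s) * real m = real_of_int b \<longrightarrow>
           pmf (iid_sum_pmf (X_pmf \<nu> K \<epsilon> c) m) (- a)
             / pmf (iid_sum_pmf (X_pmf \<nu> K \<epsilon> c) (m - 1)) (- b)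
           \<le> q powr ((r - s) * real m))"
proof -
  obtain i0 where i0: "1 < i0" "i0 \<le> K" "\<nu> i0 > 0" using nubig by blast
  define \<beta> where "\<beta> = min (\<nu> 0) (min (\<nu> 1) (\<nu> i0))"
  have K: "1 \<le> K" using i0 by simp
  have "\<nu> 0 \<le> (\<Sum>i\<le>K. \<nu> i)" using nonneg by (intro member_le_sum) auto
  then have \<beta>: "0 < \<beta>" "\<beta> \<le> 1" and D: "0 < 1 - \<epsilon>"
    unfolding \<beta>_def using nu0 nu1 i0 eps_def eps_pos by auto
  have "0 \<le> (\<Sum>i=1..K. real i * \<nu> i)" using nonneg by (intro sum_nonneg) auto
  then have \<delta>: "0 < \<delta>" "\<delta> \<le> 1" using delta_def eps_pos delta_pos by auto
  obtain q M where q: "0 < q" "q < 1" and bound: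
    "\<And>m p j a b. M \<le> m \<Longrightarrow> (\<And>k. k \<in> step_range K \<Longrightarrow> 0 \<le> p k) \<Longrightarrow> (\<Sum>k\<in>step_range K. p k) = 1 \<Longrightarrow>
      \<beta> \<le> p (-1) \<Longrightarrow> \<beta> \<le> p 0 \<Longrightarrow> j \<in> step_range K \<Longrightarrow> 1 \<le> j \<Longrightarrow> \<beta> \<le> p j \<Longrightarrow> mean K p \<le> - \<delta> \<Longrightarrow>
      0 \<le> a \<Longrightarrow> 2 * real_of_int a < \<delta> * real m \<Longrightarrow> real_of_int b \<le> \<delta> * real m \<Longrightarrow> a < b \<Longrightarrow>
      conv_pow K p m (- a) / conv_pow K p (m - 1) (- b) \<le> q ^ nat (b - a)"
    using conv_pow_ratio_bound[OF K \<beta> \<delta>] by blast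
  show ?thesis
  proof (intro exI[of _ q] conjI exI[of _ "max M 1"] allI impI)
    fix m :: nat and c s r :: real and a b :: int
    assume m: "max M 1 \<le> m"
      and "0 \<le> c \<and> c \<le> \<epsilon> \<and> 0 \<le> s \<and> s < \<delta> \<and> max s (\<delta>/2) < r \<and> r \<le> \<delta> \<and>
        (\<delta> - r) * real m = real_of_int a \<and> (\<delta> - s) * real m = real_of_int b"
    then have c: "0 \<le> c" "c \<le> \<epsilon>" and s: "0 \<le> s" and r: "s < r" "\<delta>/2 < r" "r \<le> \<delta>"
      and a: "(\<delta> - r) * real m = real_of_int a" and b: "(\<delta> - s) * real m = real_of_int b" by auto
    have "0 < m" using m by simp
    note ab = scaled_endpoints[OF this s r a b]
    note X = X_weights_nonneg[OF nonneg K eps_def D c] sum_X_weights[OF nonneg K eps_def D c]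
      X_weights_ge[OF nonneg K eps_def D c] mean_X_weights_le[OF nonneg K eps_def D c delta_def \<delta>(1)]
    have p: "\<beta> \<le> X_weights \<nu> K \<epsilon> c (- 1)" "\<beta> \<le> X_weights \<nu> K \<epsilon> c 0"
      "\<beta> \<le> X_weights \<nu> K \<epsilon> c (int i0 - 1)"
      using X(3)[of 0] X(3)[of 1] X(3)[of i0] K i0 unfolding \<beta>_def by auto
    have j: "int i0 - 1 \<in> step_range K" "1 \<le> int i0 - 1" using i0 by (auto simp: step_range_def)
    have "conv_pow K (X_weights \<nu> K \<epsilon> c) m (- a) / conv_pow K (X_weights \<nu> K \<epsilon> c) (m - 1) (- b)
        \<le> q ^ nat (b - a)"
      using m by (intro bound[OF _ X(1,2) p(1,2) j p(3) X(4) ab(1-4)]) simp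
    then show "pmf (iid_sum_pmf (X_pmf \<nu> K \<epsilon> c) m) (- a) / pmf (iid_sum_pmf (X_pmf \<nu> K \<epsilon> c) (m - 1)) (- b)
        \<le> q powr ((r - s) * real m)"
      using q ab(5) by (simp add: pmf_iid_sum_X_pmf[OF nonneg K eps_def D c] powr_realpow)
  qed (use q in auto)
qed

end
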